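(* There is an absolute constant $C$ such that the following holds. Let $k\in\mathbb Z\setminus\{0\}$, $A<A'$ real, $\rho\in\mathbb R$, and let $g_k(\cdot,\rho)\in H^1(\mathbb R)$ be the solution of $(k^2-\partial_v^2)g_k(v,\rho)+8\,\mathbf 1_{[A,A']}(v)g_k(v,\rho)=\delta(v-\rho)$ on $\mathbb R$. Let $\mu_k=\sqrt{k^2+8}$ and, for $v\in\mathbb R$, $d=|[\min(v,\rho),\max(v,\rho)]\cap[A,A']|$. Then for all $v,\rho\in\mathbb R$, $$|g_k(v,\rho)|\le \frac{C}{|k|}e^{-|k||v-\rho|}e^{-(\mu_k-|k|)d}.$$
   Context: $|I|$ denotes the Lebesgue measure of a set $I$ and $\delta$ the Dirac mass. *)

theory Defs
  imports "HOL-Analysis.Analysis"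
begin

text \<open>Test functions: C^1 functions with compact support (this class of test
functions yields the same weak derivatives / weak formulations as C_c^infinity).\<close>
definition test_fun :: "(real \<Rightarrow> real) \<Rightarrow> bool" where
  "test_fun \<phi> \<longleftrightarrow> (\<forall>x. \<phi> differentiable (at x)) \<and> continuous_on UNIV (deriv \<phi>)
     \<and> (\<exists>R. \<forall>x. \<bar>x\<bar> > R \<longrightarrow> \<phi> x = 0)"

definition L2 :: "(real \<Rightarrow> real) \<Rightarrow> bool" where
  "L2 f \<longleftrightarrow> f \<in> borel_measurable lborel \<and> integrable lborel (\<lambda>x. (f x)^2)"

definition weak_deriv :: "(real \<Rightarrow> real) \<Rightarrow> (real \<Rightarrow> real) \<Rightarrow> bool" where
  "weak_deriv g h \<longleftrightarrow> (\<forall>\<phi>. test_fun \<phi> \<longrightarrow>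
     (\<integral>x. g x * deriv \<phi> x \<partial>lborel) = - (\<integral>x. h x * \<phi> x \<partial>lborel))"

definition H1 :: "(real \<Rightarrow> real) \<Rightarrow> bool" where
  "H1 g \<longleftrightarrow> L2 g \<and> (\<exists>h. L2 h \<and> weak_deriv g h)"

definition green_sol :: "int \<Rightarrow> real \<Rightarrow> real \<Rightarrow> real \<Rightarrow> (real \<Rightarrow> real) \<Rightarrow> bool" where
  "green_sol k A A' \<rho> g \<longleftrightarrow> H1 g \<and> (\<exists>h. L2 h \<and> weak_deriv g h \<and>
     (\<forall>\<phi>. test_fun \<phi> \<longrightarrow>
        (\<integral>x. (real_of_int k)^2 * g x * \<phi> x + h x * deriv \<phi> x
              + 8 * indicator {A..A'} x * g x * \<phi> x \<partial>lborel) = \<phi> \<rho>))"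

end

(*
  Testing the weak equation against smoothed tent functions shows that g is C^1 away
  from rho, satisfies g'' = (K^2 + V 1_[A,A']) g there, and that g' jumps by -1 at rho.
  On each side of rho, w w' is nondecreasing for any solution w of w'' = q w with q >= 0,
  so a solution vanishing at rho has nondecreasing |w|; square integrability therefore
  forces g to be a multiple of the explicit decaying solution E of the same equation.
  The ratio E(v)/E(rho) is at most 2 e^{-K|v-rho|} e^{-(mu-K)d} with mu = sqrt(K^2+V),
  and E'/E <= -K, so the jump condition gives |g(rho)| <= 1/(2K). Hence C = 1 works.
*)
theory Submission
  imports Defs "HOL-Real_Asymp.Real_Asymp"
begin

section \<open>Gluing two functions at a point\<close>

definition glue :: "real \<Rightarrow> (real \<Rightarrow> 'a) \<Rightarrow> (real \<Rightarrow> 'a) \<Rightarrow> real \<Rightarrow> 'a" where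
  "glue c f1 f2 t = (if t \<le> c then f1 t else f2 t)"

lemma isCont_transform_within_open:
  assumes "isCont f a" "open S" "a \<in> S" "\<And>x. x \<in> S \<Longrightarrow> f x = g x"
  shows "isCont g a"
proof -
  have "eventually (\<lambda>x. f x = g x) (nhds a)"
    using assms(2-4) eventually_nhds by blast
  with assms(1) show ?thesis using isCont_cong by blast
qed

lemma glue_eventually_left: "eventually (\<lambda>x. glue c f1 f2 x = f1 x) (at_left c)"
  by (auto simp: glue_def eventually_at_left_field intro: exI[of _ "c - 1"])

lemma glue_eventually_right: "eventually (\<lambda>x. glue c f1 f2 x = f2 x) (at_right c)"
  by (auto simp: glue_def eventually_at_right_field intro: exI[of _ "c + 1"])

lemma has_real_derivative_glue:
  fixes f1 f2 :: "real \<Rightarrow> real"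
  assumes d1: "(f1 has_real_derivative f1' t) (at t)" and d2: "(f2 has_real_derivative f2' t) (at t)"
    and joint: "t = c \<Longrightarrow> f1 c = f2 c \<and> f1' c = f2' c"
  shows "(glue c f1 f2 has_real_derivative glue c f1' f2' t) (at t)"
proof -
  consider "t < c" | "c < t" | "t = c" by linarith
  then show ?thesis
  proof cases
    case 1
    then show ?thesis
      using has_field_derivative_transform_within_open[OF d1, of "{..<c}" "glue c f1 f2"]
      by (simp add: glue_def)
  next
    case 2
    then show ?thesis
      using has_field_derivative_transform_within_open[OF d2, of "{c<..}" "glue c f1 f2"]
      by (simp add: glue_def)
  next
    case 3
    let ?Q = "\<lambda>f y. (f y - f c) / (y - c)"
    have "(?Q f1 \<longlongrightarrow> f1' c) (at_left c)" "(?Q f2 \<longlongrightarrow> f1' c) (at_right c)"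
      using d1 d2 joint 3 unfolding has_field_derivative_iff
      by (auto intro: filterlim_mono at_le)
    moreover have "eventually (\<lambda>y. ?Q f1 y = ?Q (glue c f1 f2) y) (at_left c)"
      "eventually (\<lambda>y. ?Q f2 y = ?Q (glue c f1 f2) y) (at_right c)"
      using glue_eventually_left[of c f1 f2] glue_eventually_right[of c f1 f2] joint 3
      by (auto simp: glue_def elim!: eventually_mono)
    ultimately have "(?Q (glue c f1 f2) \<longlongrightarrow> f1' c) (at c)"
      by (intro filterlim_split_at) (auto intro: Lim_transform_eventually)
    then show ?thesis
      using 3 by (simp add: has_field_derivative_iff glue_def)
  qed
qed

lemma isCont_glue:
  fixes f1 f2 :: "real \<Rightarrow> 'a::topological_space"
  assumes "isCont f1 t" "isCont f2 t" "t = c \<Longrightarrow> f1 c = f2 c"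
  shows "isCont (glue c f1 f2) t"
proof -
  consider "t < c" | "c < t" | "t = c" by linarith
  then show ?thesis
  proof cases
    case 1
    then show ?thesis
      by (intro isCont_transform_within_open[OF assms(1), of "{..<c}"]) (auto simp: glue_def)
  next
    case 2
    then show ?thesis
      by (intro isCont_transform_within_open[OF assms(2), of "{c<..}"]) (auto simp: glue_def)
  next
    case 3
    have "(f1 \<longlongrightarrow> f1 c) (at_left c)" "(f2 \<longlongrightarrow> f1 c) (at_right c)"
      using assms 3 unfolding isCont_def by (auto intro: filterlim_mono at_le)
    then have "(glue c f1 f2 \<longlongrightarrow> f1 c) (at c)"
      using tendsto_cong[OF glue_eventually_left[of c f1 f2]]
        tendsto_cong[OF glue_eventually_right[of c f1 f2]]
      by (intro filterlim_split_at) simp_all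
    then show ?thesis
      using 3 by (simp add: isCont_def glue_def)
  qed
qed

lemma has_real_derivative_glue_everywhere:
  fixes f1 f2 :: "real \<Rightarrow> real"
  assumes "\<And>t. (f1 has_real_derivative f1' t) (at t)" "\<And>t. (f2 has_real_derivative f2' t) (at t)"
    and "f1 c = f2 c" "f1' c = f2' c"
  shows "(glue c f1 f2 has_real_derivative glue c f1' f2' t) (at t)"
  using assms by (intro has_real_derivative_glue) auto

lemma isCont_glue_everywhere:
  fixes f1 f2 :: "real \<Rightarrow> 'a::topological_space"
  assumes "\<And>t. isCont f1 t" "\<And>t. isCont f2 t" "f1 c = f2 c"
  shows "isCont (glue c f1 f2) t"
  using assms by (intro isCont_glue) auto

section \<open>The decaying solution of the barrier equation\<close>

lemma exp_neg_mult_cosh_sinh_mono: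
  fixes a b s s' :: real
  assumes "a \<le> b" "s' \<le> s"
  shows "exp (- s') * (a * cosh s' + b * sinh s') \<le> exp (- s) * (a * cosh s + b * sinh s)"
proof -
  have eq: "exp (- x) * (a * cosh x + b * sinh x) = (a + b) / 2 + (a - b) / 2 * exp (- 2 * x)" for x
    by (simp add: cosh_def sinh_def diff_divide_distrib add_divide_distrib algebra_simps flip: exp_add)
  have "(a - b) / 2 * exp (- 2 * s') \<le> (a - b) / 2 * exp (- 2 * s)"
    using assms by (intro mult_left_mono_neg) auto
  then show ?thesis
    unfolding eq by simp
qed

lemma mult_deriv_mono_of_nonneg_potential:
  fixes w w' q :: "real \<Rightarrow> real"
  assumes "finite S"
    and w_cont: "continuous_on {\<rho>..} w"
    and w_deriv: "\<And>y. \<rho> < y \<Longrightarrow> (w has_real_derivative w' y) (at y)"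
    and w'_cont: "continuous_on {\<rho><..} w'"
    and w'_deriv: "\<And>y. \<rho> < y \<Longrightarrow> y \<notin> S \<Longrightarrow> (w' has_real_derivative q y * w y) (at y)"
    and q_nonneg: "\<And>y. 0 \<le> q y"
    and "\<rho> < s" "s \<le> t"
  shows "w s * w' s \<le> w t * w' t"
proof -
  have "((\<lambda>y. w' y * w' y + q y * (w y * w y)) has_integral (w t * w' t - w s * w' s)) {s..t}"
  proof (rule fundamental_theorem_of_calculus_interior_strong[OF \<open>finite S\<close>])
    show "continuous_on {s..t} (\<lambda>y. w y * w' y)"
      using assms by (intro continuous_intros continuous_on_subset[OF w_cont]
          continuous_on_subset[OF w'_cont]) auto
    fix y
    assume "y \<in> {s<..<t} - S"
    then have "\<rho> < y" "y \<notin> S"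
      using assms by auto
    from DERIV_mult[OF w_deriv[OF this(1)] w'_deriv[OF this]]
    show "((\<lambda>y. w y * w' y) has_vector_derivative w' y * w' y + q y * (w y * w y)) (at y)"
      by (simp add: has_real_derivative_iff_has_vector_derivative algebra_simps)
  qed (use assms in auto)
  then show ?thesis
    using q_nonneg by (force dest: has_integral_nonneg)
qed

lemma square_mono_of_nonneg_potential:
  fixes w w' q :: "real \<Rightarrow> real"
  assumes "finite S"
    and w_cont: "continuous_on {\<rho>..} w" and w_\<rho>: "w \<rho> = 0"
    and w_deriv: "\<And>y. \<rho> < y \<Longrightarrow> (w has_real_derivative w' y) (at y)"
    and w'_cont: "continuous_on {\<rho><..} w'"
    and w'_deriv: "\<And>y. \<rho> < y \<Longrightarrow> y \<notin> S \<Longrightarrow> (w' has_real_derivative q y * w y) (at y)"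
    and q_nonneg: "\<And>y. 0 \<le> q y"
    and w'_lim: "(w' \<longlongrightarrow> l) (at_right \<rho>)"
    and "\<rho> \<le> s" "s \<le> t"
  shows "(w s)\<^sup>2 \<le> (w t)\<^sup>2"
proof -
  note energy_mono = mult_deriv_mono_of_nonneg_potential[OF \<open>finite S\<close> w_cont w_deriv w'_cont w'_deriv q_nonneg]
  have "(w \<longlongrightarrow> 0) (at_right \<rho>)"
    using w_cont w_\<rho> unfolding continuous_on_def
    by (metis atLeast_iff order_refl tendsto_mono at_le Ioi_le_Ico)
  then have energy_lim: "((\<lambda>y. w y * w' y) \<longlongrightarrow> 0) (at_right \<rho>)"
    using tendsto_mult[OF _ w'_lim] by fastforce
  have energy_nonneg: "0 \<le> w y * w' y" if "\<rho> < y" for y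
  proof (rule tendsto_upperbound[OF energy_lim])
    show "eventually (\<lambda>x. w x * w' x \<le> w y * w' y) (at_right \<rho>)"
      using eventually_at_right_real[OF that] by eventually_elim (simp add: energy_mono)
  qed simp
  show ?thesis
  proof (cases "s = \<rho>")
    case True
    then show ?thesis
      using w_\<rho> by simp
  next
    case False
    then have "\<rho> < s"
      using \<open>\<rho> \<le> s\<close> by simp
    have "((\<lambda>y. 2 * (w y * w' y)) has_integral ((w t)\<^sup>2 - (w s)\<^sup>2)) {s..t}"
    proof (rule fundamental_theorem_of_calculus_interior_strong[of "{}"])
      show "continuous_on {s..t} (\<lambda>y. (w y)\<^sup>2)"
        using \<open>\<rho> < s\<close> by (intro continuous_intros continuous_on_subset[OF w_cont]) auto
      fix y
      assume "y \<in> {s<..<t} - {}"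
      then have "\<rho> < y"
        using \<open>\<rho> < s\<close> by auto
      from DERIV_power[OF w_deriv[OF this], of 2]
      show "((\<lambda>y. (w y)\<^sup>2) has_vector_derivative 2 * (w y * w' y)) (at y)"
        by (simp add: has_real_derivative_iff_has_vector_derivative algebra_simps)
    qed (use \<open>s \<le> t\<close> in auto)
    then show ?thesis
      using energy_nonneg \<open>\<rho> < s\<close> by (force dest: has_integral_nonneg)
  qed
qed

lemma square_integrable_not_bounded_below:
  fixes g :: "real \<Rightarrow> real"
  assumes "integrable lborel (\<lambda>x. (g x)\<^sup>2)" "0 < c"
  shows "\<not> (\<forall>x\<ge>Y. c \<le> \<bar>g x\<bar>)"
proof
  assume bound: "\<forall>x\<ge>Y. c \<le> \<bar>g x\<bar>"
  obtain n :: nat where n: "(\<integral>x. (g x)\<^sup>2 \<partial>lborel) < real n * c\<^sup>2"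
    using reals_Archimedean2[of "(\<integral>x. (g x)\<^sup>2 \<partial>lborel) / c\<^sup>2"] assms(2)
    by (auto simp: field_simps)
  have "real n * c\<^sup>2 = (\<integral>x. indicator {Y..Y + real n} x * c\<^sup>2 \<partial>lborel)"
    by simp
  also have "\<dots> \<le> (\<integral>x. (g x)\<^sup>2 \<partial>lborel)"
  proof (rule integral_mono[OF _ assms(1)])
    show "integrable lborel (\<lambda>x. indicator {Y..Y + real n} x * c\<^sup>2)"
      by (intro integrable_mult_left integrable_real_indicator) auto
    fix x
    show "indicator {Y..Y + real n} x * c\<^sup>2 \<le> (g x)\<^sup>2"
      using bound assms(2) by (auto simp: indicator_def abs_le_square_iff[symmetric] less_imp_le)
  qed
  finally show False
    using n by simp
qed

lemma eq_0_of_nonneg_potential: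
  fixes w w' q u :: "real \<Rightarrow> real"
  assumes "finite S"
    and "continuous_on {\<rho>..} w" "w \<rho> = 0"
    and "\<And>y. \<rho> < y \<Longrightarrow> (w has_real_derivative w' y) (at y)"
    and "continuous_on {\<rho><..} w'"
    and "\<And>y. \<rho> < y \<Longrightarrow> y \<notin> S \<Longrightarrow> (w' has_real_derivative q y * w y) (at y)"
    and "\<And>y. 0 \<le> q y"
    and "(w' \<longlongrightarrow> l) (at_right \<rho>)"
    and L2: "integrable lborel (\<lambda>x. (w x + u x)\<^sup>2)" and u_lim: "(u \<longlongrightarrow> 0) at_top"
    and "\<rho> \<le> y"
  shows "w y = 0"
proof (rule ccontr)
  assume "w y \<noteq> 0"
  then have c: "0 < \<bar>w y\<bar> / 2"
    by simp
  have "((\<lambda>x. \<bar>u x\<bar>) \<longlongrightarrow> 0) at_top"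
    by (rule tendsto_rabs_zero[OF u_lim])
  then have "eventually (\<lambda>x. \<bar>u x\<bar> < \<bar>w y\<bar> / 2) at_top"
    using c by (rule order_tendstoD(2))
  then obtain Y where Y: "\<And>x. Y \<le> x \<Longrightarrow> \<bar>u x\<bar> < \<bar>w y\<bar> / 2"
    by (auto simp: eventually_at_top_linorder)
  have "\<bar>w y\<bar> / 2 \<le> \<bar>w x + u x\<bar>" if "max Y y \<le> x" for x
  proof -
    have "\<bar>w y\<bar> \<le> \<bar>w x\<bar>"
      using square_mono_of_nonneg_potential[OF assms(1-8), of y x] \<open>\<rho> \<le> y\<close> that
      by (simp add: abs_le_square_iff)
    moreover have "\<bar>w x\<bar> \<le> \<bar>w x + u x\<bar> + \<bar>u x\<bar>"
      using abs_triangle_ineq[of "w x + u x" "- u x"] by simp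
    ultimately show ?thesis
      using Y[of x] that by linarith
  qed
  with square_integrable_not_bounded_below[OF L2 c] show False
    by blast
qed

text \<open>\<open>E\<close> solves \<open>E'' = (K\<^sup>2 + (\<mu>\<^sup>2 - K\<^sup>2) 1\<^bsub>[A,A']\<^esub>) E\<close>, equals \<open>exp (- K (y - A'))\<close>
  beyond \<open>A'\<close>, and is continued to the left of \<open>A\<close> through its value and slope at \<open>A\<close>.\<close>

locale decaying_solution =
  fixes K \<mu> A A' :: real
  assumes K_pos: "0 < K" and K_less_mu: "K < \<mu>" and A_less: "A < A'"
begin

definition E_mid :: "real \<Rightarrow> real" where
  "E_mid y = cosh (\<mu> * (A' - y)) + K / \<mu> * sinh (\<mu> * (A' - y))"

definition E_mid' :: "real \<Rightarrow> real" where
  "E_mid' y = - \<mu> * sinh (\<mu> * (A' - y)) - K * cosh (\<mu> * (A' - y))"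

definition E_left :: "real \<Rightarrow> real" where
  "E_left y = E_mid A * cosh (K * (A - y)) - E_mid' A / K * sinh (K * (A - y))"

definition E_left' :: "real \<Rightarrow> real" where
  "E_left' y = - K * E_mid A * sinh (K * (A - y)) + E_mid' A * cosh (K * (A - y))"

definition E :: "real \<Rightarrow> real" where
  "E = glue A E_left (glue A' E_mid (\<lambda>y. exp (- K * (y - A'))))"

definition E' :: "real \<Rightarrow> real" where
  "E' = glue A E_left' (glue A' E_mid' (\<lambda>y. - K * exp (- K * (y - A'))))"

lemma mu_pos: "0 < \<mu>"
  using K_pos K_less_mu by simp

lemma E_mid_pos: "y \<le> A' \<Longrightarrow> 0 < E_mid y"
  using K_pos mu_pos by (auto simp: E_mid_def intro!: add_pos_nonneg)

lemma E_mid'_A_le: "E_mid' A \<le> - K * E_mid A"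
proof -
  have "K * (K / \<mu>) \<le> \<mu>"
    using K_pos K_less_mu by (simp add: field_simps power2_eq_square[symmetric] power_strict_mono less_imp_le)
  then have "K * (K / \<mu>) * sinh (\<mu> * (A' - A)) \<le> \<mu> * sinh (\<mu> * (A' - A))"
    using A_less mu_pos by (intro mult_right_mono) auto
  then show ?thesis
    by (simp add: E_mid_def E_mid'_def algebra_simps)
qed

lemma E_left: "y \<le> A \<Longrightarrow> E y = E_left y"
  and E_mid: "A \<le> y \<Longrightarrow> y \<le> A' \<Longrightarrow> E y = E_mid y"
  and E_right: "A' \<le> y \<Longrightarrow> E y = exp (- K * (y - A'))"
  using A_less by (auto simp: E_def glue_def E_left_def E_mid_def)

lemma E'_left: "y \<le> A \<Longrightarrow> E' y = E_left' y"
  and E'_mid: "A \<le> y \<Longrightarrow> y \<le> A' \<Longrightarrow> E' y = E_mid' y"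
  and E'_right: "A' \<le> y \<Longrightarrow> E' y = - K * exp (- K * (y - A'))"
  using A_less by (auto simp: E'_def glue_def E_left'_def E_mid'_def)

lemma E_pos: "0 < E y"
proof -
  consider "y \<le> A" | "A \<le> y" "y \<le> A'" | "A' \<le> y" by linarith
  then show ?thesis
  proof cases
    case 1
    have "0 < K * E_mid A"
      using E_mid_pos[of A] A_less K_pos by simp
    then have "0 \<le> - E_mid' A / K"
      using E_mid'_A_le K_pos by (simp add: field_simps)
    then have "0 \<le> - E_mid' A / K * sinh (K * (A - y))"
      using K_pos 1 by (intro mult_nonneg_nonneg) auto
    moreover have "0 < E_mid A * cosh (K * (A - y))"
      using E_mid_pos[of A] A_less by simp
    ultimately show ?thesis
      unfolding E_left[OF 1] E_left_def by linarith
  qed (simp_all add: E_mid E_mid_pos E_right)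
qed

lemma E_mid_has_real_derivative: "(E_mid has_real_derivative E_mid' y) (at y)"
  unfolding E_mid_def[abs_def] E_mid'_def using mu_pos
  by (auto intro!: derivative_eq_intros simp: field_simps)

lemma E_left_has_real_derivative: "(E_left has_real_derivative E_left' y) (at y)"
  unfolding E_left_def[abs_def] E_left'_def using K_pos
  by (auto intro!: derivative_eq_intros simp: field_simps)

lemma E_mid'_has_real_derivative: "(E_mid' has_real_derivative \<mu>\<^sup>2 * E_mid y) (at y)"
  unfolding E_mid_def E_mid'_def[abs_def] using mu_pos
  by (auto intro!: derivative_eq_intros simp: field_simps power2_eq_square)

lemma E_left'_has_real_derivative: "(E_left' has_real_derivative K\<^sup>2 * E_left y) (at y)"
  unfolding E_left_def E_left'_def[abs_def] using K_pos
  by (auto intro!: derivative_eq_intros simp: field_simps power2_eq_square)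

lemma E_has_real_derivative: "(E has_real_derivative E' y) (at y)"
  unfolding E_def E'_def using A_less
  by (intro has_real_derivative_glue_everywhere E_left_has_real_derivative E_mid_has_real_derivative)
    (auto intro!: derivative_eq_intros simp: glue_def E_left_def E_left'_def E_mid_def E_mid'_def)

lemma isCont_E': "isCont E' y"
  unfolding E'_def using A_less
  by (intro isCont_glue_everywhere DERIV_isCont[OF E_left'_has_real_derivative]
      DERIV_isCont[OF E_mid'_has_real_derivative] continuous_intros)
    (auto simp: glue_def E_left'_def E_mid'_def)

lemma E'_has_real_derivative:
  assumes "y \<noteq> A" "y \<noteq> A'"
  shows "(E' has_real_derivative (K\<^sup>2 + (\<mu>\<^sup>2 - K\<^sup>2) * indicator {A..A'} y) * E y) (at y)"
proof -
  have "(glue A' E_mid' (\<lambda>y. - K * exp (- K * (y - A'))) has_real_derivative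
      glue A' (\<lambda>y. \<mu>\<^sup>2 * E_mid y) (\<lambda>y. K\<^sup>2 * exp (- K * (y - A'))) y) (at y)"
    using assms
    by (intro has_real_derivative_glue E_mid'_has_real_derivative)
      (auto intro!: derivative_eq_intros simp: power2_eq_square)
  then have "(E' has_real_derivative glue A (\<lambda>y. K\<^sup>2 * E_left y) (glue A' (\<lambda>y. \<mu>\<^sup>2 * E_mid y)
      (\<lambda>y. K\<^sup>2 * exp (- K * (y - A')))) y) (at y)"
    unfolding E'_def
    by (rule has_real_derivative_glue[where f1'="\<lambda>y. K\<^sup>2 * E_left y" and t=y, OF E_left'_has_real_derivative]) (use assms in auto)
  moreover have "glue A (\<lambda>y. K\<^sup>2 * E_left y) (glue A' (\<lambda>y. \<mu>\<^sup>2 * E_mid y)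
      (\<lambda>y. K\<^sup>2 * exp (- K * (y - A')))) y = (K\<^sup>2 + (\<mu>\<^sup>2 - K\<^sup>2) * indicator {A..A'} y) * E y"
    using assms by (auto simp: glue_def E_left E_mid E_right indicator_def)
  ultimately show ?thesis
    by simp
qed

lemma E'_le: "E' y \<le> - K * E y"
proof -
  consider "y \<le> A" | "A \<le> y" "y \<le> A'" | "A' \<le> y" by linarith
  then show ?thesis
  proof cases
    case 1
    have "(E_mid' A + K * E_mid A) * (cosh (K * (A - y)) - sinh (K * (A - y))) \<le> 0"
      using E_mid'_A_le sinh_le_cosh_real[of "K * (A - y)"] by (intro mult_nonpos_nonneg) auto
    moreover have "E' y + K * E y = (E_mid' A + K * E_mid A) * (cosh (K * (A - y)) - sinh (K * (A - y)))"
      using 1 K_pos by (simp add: E_left E'_left E_left_def E_left'_def field_simps)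
    ultimately show ?thesis
      by simp
  next
    case 2
    have "K * (K / \<mu>) * sinh (\<mu> * (A' - y)) \<le> \<mu> * sinh (\<mu> * (A' - y))"
      using K_pos K_less_mu 2 mu_pos
      by (intro mult_right_mono) (auto simp: field_simps power2_eq_square[symmetric] power_strict_mono less_imp_le)
    then show ?thesis
      using 2 by (simp add: E_mid E'_mid E_mid_def E_mid'_def algebra_simps)
  next
    case 3
    then show ?thesis
      by (simp add: E_right E'_right)
  qed
qed

lemma E_decay_outside:
  assumes "t \<le> t'" and "t' \<le> A \<or> A' \<le> t"
  shows "E t' \<le> exp (- K * (t' - t)) * E t"
  using assms(2)
proof
  assume "t' \<le> A"
  have "0 \<le> K * E_mid A"
    using E_mid_pos[of A] A_less K_pos by simp
  then have "E_mid A \<le> - E_mid' A / K"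
    using E_mid'_A_le K_pos by (simp add: field_simps)
  then have "exp (- (K * (A - t'))) * E t' \<le> exp (- (K * (A - t))) * E t"
    using exp_neg_mult_cosh_sinh_mono[of "E_mid A" "- E_mid' A / K" "K * (A - t')" "K * (A - t)"]
      assms(1) \<open>t' \<le> A\<close> K_pos
    by (simp add: E_left E_left_def algebra_simps)
  then have "exp (K * (A - t')) * (exp (- (K * (A - t'))) * E t')
      \<le> exp (K * (A - t')) * (exp (- (K * (A - t))) * E t)"
    by simp
  then show ?thesis
    by (simp add: algebra_simps flip: exp_add mult.assoc)
next
  assume "A' \<le> t"
  then show ?thesis
    using assms(1) by (simp add: E_right flip: exp_add) (simp add: algebra_simps)
qed

lemma E_decay_inside:
  assumes "A \<le> t" "t \<le> t'" "t' \<le> A'"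
  shows "E t' \<le> 2 * exp (- \<mu> * (t' - t)) * E t"
proof -
  have "K / \<mu> * sinh (\<mu> * (A' - t')) \<le> sinh (\<mu> * (A' - t'))"
    using assms K_pos K_less_mu mu_pos by (intro mult_left_le_one_le) auto
  then have "E t' \<le> cosh (\<mu> * (A' - t')) + sinh (\<mu> * (A' - t'))"
    using assms by (simp add: E_mid E_mid_def)
  also have "\<dots> = exp (\<mu> * (A' - t)) * exp (- \<mu> * (t' - t))"
    by (simp add: cosh_plus_sinh flip: exp_add) (simp add: algebra_simps)
  also have "exp (\<mu> * (A' - t)) \<le> 2 * E t"
  proof -
    have "exp (\<mu> * (A' - t)) \<le> 2 * cosh (\<mu> * (A' - t))"
      by (simp add: cosh_def)
    moreover have "0 \<le> K / \<mu> * sinh (\<mu> * (A' - t))"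
      using assms mu_pos K_pos by simp
    ultimately show ?thesis
      using assms by (simp add: E_mid E_mid_def)
  qed
  finally show ?thesis
    by (simp add: mult_ac)
qed

lemma E_ratio_bound:
  assumes "\<rho> \<le> v"
  shows "E v \<le> 2 * exp (- K * (v - \<rho>)) * exp (- (\<mu> - K) * max 0 (min v A' - max \<rho> A)) * E \<rho>"
proof -
  consider "v \<le> A \<or> A' \<le> \<rho>" | "max \<rho> A \<le> min v A'"
    using assms A_less by linarith
  then show ?thesis
  proof cases
    case 1
    then have "max 0 (min v A' - max \<rho> A) = 0"
      using assms A_less by linarith
    moreover have "0 < exp (- K * (v - \<rho>)) * E \<rho>"
      using E_pos[of \<rho>] by simp
    ultimately show ?thesis
      using E_decay_outside[OF assms 1] by simp
  next
    case 2
    define s t where "s = max \<rho> A" and "t = min v A'"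
    have "E s \<le> exp (- K * (s - \<rho>)) * E \<rho>"
      using E_decay_outside[of \<rho> A] by (cases "\<rho> \<le> A") (auto simp: s_def)
    moreover have "E v \<le> exp (- K * (v - t)) * E t"
      using E_decay_outside[of A' v] by (cases "A' \<le> v") (auto simp: t_def)
    moreover have "E t \<le> 2 * exp (- \<mu> * (t - s)) * E s"
      using 2 assms A_less by (intro E_decay_inside) (auto simp: s_def t_def)
    ultimately have "E v \<le> exp (- K * (v - t)) * (2 * exp (- \<mu> * (t - s)) * (exp (- K * (s - \<rho>)) * E \<rho>))"
      by (smt (verit) exp_gt_zero mult_left_mono)
    also have "\<dots> = 2 * exp (- K * (v - \<rho>)) * exp (- (\<mu> - K) * (t - s)) * E \<rho>"
      by (simp add: algebra_simps flip: exp_add)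
    finally show ?thesis
      using 2 by (simp add: s_def t_def)
  qed
qed

lemma abs_scaled_E_le:
  assumes "\<rho> \<le> v" "2 * \<bar>M\<bar> \<le> 1 / K"
  shows "\<bar>M / E \<rho> * E v\<bar>
    \<le> 1 / K * exp (- K * (v - \<rho>)) * exp (- (\<mu> - K) * max 0 (min v A' - max \<rho> A))"
proof -
  define X where "X = exp (- K * (v - \<rho>)) * exp (- (\<mu> - K) * max 0 (min v A' - max \<rho> A))"
  have "\<bar>M / E \<rho> * E v\<bar> = \<bar>M\<bar> * (E v / E \<rho>)"
    using E_pos[of \<rho>] E_pos[of v] by (simp add: abs_mult)
  also have "\<dots> \<le> \<bar>M\<bar> * (2 * X)"
    using E_ratio_bound[OF assms(1)] E_pos[of \<rho>]
    by (intro mult_left_mono) (auto simp: X_def pos_divide_le_eq mult_ac)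
  also have "\<dots> = (2 * \<bar>M\<bar>) * X"
    by simp
  also have "\<dots> \<le> 1 / K * X"
    using assms(2) by (rule mult_right_mono) (simp add: X_def)
  finally show ?thesis
    by (simp add: X_def mult.assoc)
qed

lemma E_tendsto_zero: "(E \<longlongrightarrow> 0) at_top"
proof -
  have "((\<lambda>y. exp (- K * (y - A'))) \<longlongrightarrow> 0) at_top"
    using K_pos by real_asymp
  moreover have "eventually (\<lambda>y. exp (- K * (y - A')) = E y) at_top"
    by (auto simp: eventually_at_top_linorder E_right intro!: exI[of _ A'])
  ultimately show ?thesis
    by (rule Lim_transform_eventually)
qed

lemma tendsto_deriv_eq_multiple_E':
  assumes "\<And>y. \<rho> \<le> y \<Longrightarrow> g y = m * E y"
    and g_deriv: "\<And>y. \<rho> < y \<Longrightarrow> (g has_real_derivative g' y) (at y)"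
    and g'_lim: "(g' \<longlongrightarrow> l) (at_right \<rho>)"
  shows "l = m * E' \<rho>"
proof -
  have "g' y = m * E' y" if "\<rho> < y" for y
  proof -
    have "(g has_real_derivative m * E' y) (at y)"
      using that assms(1)
      by (intro has_field_derivative_transform_within_open[where S="{\<rho><..}",
            OF DERIV_cmult[OF E_has_real_derivative]]) auto
    then show ?thesis
      using DERIV_unique[OF g_deriv[OF that]] by blast
  qed
  then have "eventually (\<lambda>y. m * E' y = g' y) (at_right \<rho>)"
    unfolding eventually_at_right_field by (intro exI[of _ "\<rho> + 1"]) simp
  moreover have "((\<lambda>y. m * E' y) \<longlongrightarrow> m * E' \<rho>) (at_right \<rho>)"
    using isCont_E'[of \<rho>] unfolding isCont_def filterlim_at_split by (auto intro: tendsto_intros)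
  ultimately have "(g' \<longlongrightarrow> m * E' \<rho>) (at_right \<rho>)"
    by (rule Lim_transform_eventually[rotated])
  then show ?thesis
    using tendsto_unique[OF _ g'_lim] by simp
qed

lemma eq_multiple_E:
  fixes g g' :: "real \<Rightarrow> real"
  assumes g_cont: "continuous_on {\<rho>..} g"
    and g_deriv: "\<And>y. \<rho> < y \<Longrightarrow> (g has_real_derivative g' y) (at y)"
    and g'_cont: "continuous_on {\<rho><..} g'"
    and g'_deriv: "\<And>y. \<rho> < y \<Longrightarrow> y \<noteq> A \<Longrightarrow> y \<noteq> A' \<Longrightarrow>
      (g' has_real_derivative (K\<^sup>2 + (\<mu>\<^sup>2 - K\<^sup>2) * indicator {A..A'} y) * g y) (at y)"
    and g'_lim: "(g' \<longlongrightarrow> l) (at_right \<rho>)"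
    and g_L2: "integrable lborel (\<lambda>x. (g x)\<^sup>2)"
  shows "\<forall>y\<ge>\<rho>. g y = g \<rho> / E \<rho> * E y" and "l = g \<rho> / E \<rho> * E' \<rho>"
proof -
  define m where "m = g \<rho> / E \<rho>"
  define w where "w y = g y - m * E y" for y
  define w' where "w' y = g' y - m * E' y" for y
  define q where "q y = K\<^sup>2 + (\<mu>\<^sup>2 - K\<^sup>2) * indicator {A..A'} y" for y
  have "w y = 0" if "\<rho> \<le> y" for y
  proof (rule eq_0_of_nonneg_potential[of "{A, A'}" \<rho> w w' q "l - m * E' \<rho>" "\<lambda>x. m * E x"])
    show "continuous_on {\<rho>..} w"
      unfolding w_def using DERIV_isCont[OF E_has_real_derivative]
      by (intro continuous_intros g_cont continuous_at_imp_continuous_on) auto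
    show "(w has_real_derivative w' y) (at y)" if "\<rho> < y" for y
      unfolding w_def w'_def by (intro DERIV_diff g_deriv DERIV_cmult E_has_real_derivative that)
    show "continuous_on {\<rho><..} w'"
      unfolding w'_def using isCont_E'
      by (intro continuous_intros g'_cont continuous_at_imp_continuous_on) auto
    show "(w' has_real_derivative q y * w y) (at y)" if "\<rho> < y" "y \<notin> {A, A'}" for y
    proof -
      have "(w' has_real_derivative q y * g y - m * (q y * E y)) (at y)"
        unfolding w'_def q_def using that
        by (intro DERIV_diff g'_deriv DERIV_cmult E'_has_real_derivative) auto
      then show ?thesis
        by (simp add: w_def algebra_simps)
    qed
    show "(w' \<longlongrightarrow> l - m * E' \<rho>) (at_right \<rho>)"
      using isCont_E'[of \<rho>] g'_lim unfolding w'_def isCont_def filterlim_at_split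
      by (intro tendsto_diff tendsto_mult_left) auto
    show "0 \<le> q y" for y
      using K_less_mu K_pos by (simp add: q_def power_strict_mono less_imp_le)
    show "w \<rho> = 0"
      using E_pos[of \<rho>] by (simp add: w_def m_def)
    show "integrable lborel (\<lambda>x. (w x + m * E x)\<^sup>2)"
      using g_L2 by (simp add: w_def)
    show "((\<lambda>x. m * E x) \<longlongrightarrow> 0) at_top"
      by (intro tendsto_mult_right_zero E_tendsto_zero)
  qed (use that in simp_all)
  then have g_eq: "g y = m * E y" if "\<rho> \<le> y" for y
    using that by (simp add: w_def)
  then show "\<forall>y\<ge>\<rho>. g y = g \<rho> / E \<rho> * E y"
    unfolding m_def[symmetric] by blast
  show "l = g \<rho> / E \<rho> * E' \<rho>"
    unfolding m_def[symmetric] using g_eq g_deriv g'_lim by (rule tendsto_deriv_eq_multiple_E')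
qed

end

section \<open>Smoothed tent functions\<close>

definition smooth_ramp :: "real \<Rightarrow> real \<Rightarrow> real" where
  "smooth_ramp e = glue (- e) (\<lambda>_. 0) (glue 0 (\<lambda>t. (t + e) ^ 3 / (6 * e\<^sup>2))
     (glue e (\<lambda>t. t + (e - t) ^ 3 / (6 * e\<^sup>2)) (\<lambda>t. t)))"

definition smooth_step :: "real \<Rightarrow> real \<Rightarrow> real" where
  "smooth_step e = glue (- e) (\<lambda>_. 0) (glue 0 (\<lambda>t. (t + e)\<^sup>2 / (2 * e\<^sup>2))
     (glue e (\<lambda>t. 1 - (e - t)\<^sup>2 / (2 * e\<^sup>2)) (\<lambda>_. 1)))"

definition hat :: "real \<Rightarrow> real \<Rightarrow> real" where
  "hat e = glue (- e) (\<lambda>_. 0) (glue 0 (\<lambda>t. (t + e) / e\<^sup>2) (glue e (\<lambda>t. (e - t) / e\<^sup>2) (\<lambda>_. 0)))"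

lemma has_real_derivative_smooth_ramp:
  "0 < e \<Longrightarrow> (smooth_ramp e has_real_derivative smooth_step e t) (at t)"
  unfolding smooth_ramp_def smooth_step_def
  by (intro has_real_derivative_glue_everywhere)
    (auto intro!: derivative_eq_intros simp: glue_def field_simps power2_eq_square power3_eq_cube)

lemma has_real_derivative_smooth_step:
  "0 < e \<Longrightarrow> (smooth_step e has_real_derivative hat e t) (at t)"
  unfolding smooth_step_def hat_def
  by (intro has_real_derivative_glue_everywhere)
    (auto intro!: derivative_eq_intros simp: glue_def field_simps power2_eq_square)

lemma isCont_hat: "0 < e \<Longrightarrow> isCont (hat e) t"
  unfolding hat_def by (intro isCont_glue_everywhere continuous_intros) (auto simp: glue_def)

lemma hat_nonneg: "0 < e \<Longrightarrow> 0 \<le> hat e t"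
  by (simp add: hat_def glue_def)

lemma hat_eq_0: "0 < e \<Longrightarrow> e \<le> \<bar>t\<bar> \<Longrightarrow> hat e t = 0"
  by (auto simp: hat_def glue_def)

lemma smooth_ramp_eq: "0 < e \<Longrightarrow> t \<le> - e \<Longrightarrow> smooth_ramp e t = 0"
  "0 < e \<Longrightarrow> e \<le> t \<Longrightarrow> smooth_ramp e t = t"
  by (auto simp: smooth_ramp_def glue_def)

lemma smooth_step_eq: "0 < e \<Longrightarrow> t \<le> - e \<Longrightarrow> smooth_step e t = 0"
  "0 < e \<Longrightarrow> e \<le> t \<Longrightarrow> smooth_step e t = 1"
  by (auto simp: smooth_step_def glue_def)

lemma smooth_ramp_approx:
  assumes "0 < e"
  shows "\<bar>smooth_ramp e t - max 0 t\<bar> \<le> e"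
proof -
  have cube: "s ^ 3 / (6 * e\<^sup>2) \<le> e" if "0 \<le> s" "s \<le> e" for s
  proof -
    have "s ^ 3 / (6 * e\<^sup>2) \<le> e ^ 3 / (6 * e\<^sup>2)"
      using that by (intro divide_right_mono power_mono) auto
    also have "\<dots> = e / 6"
      using assms by (simp add: field_simps power2_eq_square power3_eq_cube)
    finally show ?thesis
      using assms by simp
  qed
  consider "t \<le> - e" | "- e < t" "t \<le> 0" | "0 < t" "t \<le> e" | "e < t"
    by linarith
  then show ?thesis
  proof cases
    case 2
    then show ?thesis
      using assms cube[of "t + e"] by (auto simp: smooth_ramp_def glue_def)
  next
    case 3
    then show ?thesis
      using assms cube[of "e - t"] by (auto simp: smooth_ramp_def glue_def)
  qed (use assms in \<open>auto simp: smooth_ramp_def glue_def\<close>)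
qed

lemma integral_hat:
  assumes "0 < e"
  shows "(\<integral>t. hat e (t - c) \<partial>lborel) = 1"
proof -
  have "hat e (t - c) = 0" if "t \<notin> {c - e..c + e}" for t
    using that by (intro hat_eq_0[OF assms]) auto
  then have "(\<integral>t. hat e (t - c) \<partial>lborel) = (\<integral>t. indicator {c - e..c + e} t *\<^sub>R hat e (t - c) \<partial>lborel)"
    by (intro arg_cong[where f="integral\<^sup>L lborel"]) (auto simp: indicator_def fun_eq_iff)
  also have "\<dots> = smooth_step e ((c + e) - c) - smooth_step e ((c - e) - c)"
  proof (rule integral_FTC_atLeastAtMost)
    fix t
    have "((\<lambda>t. smooth_step e (t - c)) has_real_derivative hat e (t - c)) (at t)"
      using DERIV_shift[of "smooth_step e" "hat e (t - c)" t "- c"] has_real_derivative_smooth_step[OF assms]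
      by simp
    then show "((\<lambda>t. smooth_step e (t - c)) has_vector_derivative hat e (t - c)) (at t within {c - e..c + e})"
      by (simp add: has_real_derivative_iff_has_vector_derivative has_vector_derivative_at_within)
  next
    show "continuous_on {c - e..c + e} (\<lambda>t. hat e (t - c))"
      using isCont_hat[OF assms]
      by (intro continuous_at_imp_continuous_on ballI continuous_intros)
        (auto intro: isCont_o2[of _ _ "hat e", simplified])
  qed (use assms in auto)
  also have "\<dots> = 1"
    using assms by (simp add: smooth_step_eq)
  finally show ?thesis .
qed

text \<open>For \<open>F = max 0\<close> and \<open>x < y < z\<close>, \<open>second_diff F x y z\<close> is the tent supported on \<open>[x, z]\<close>
  with peak at \<open>y\<close>; integrated against \<open>w''\<close> it yields the second difference of \<open>w\<close>.\<close>

definition second_diff :: "(real \<Rightarrow> real) \<Rightarrow> real \<Rightarrow> real \<Rightarrow> real \<Rightarrow> real \<Rightarrow> real" where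
  "second_diff F x y z t = (z - y) * (F (t - x) - F (t - y)) - (y - x) * (F (t - y) - F (t - z))"

lemma has_real_derivative_second_diff:
  assumes "\<And>s. (F has_real_derivative F' s) (at s)"
  shows "(second_diff F x y z has_real_derivative second_diff F' x y z t) (at t)"
proof -
  have shift: "((\<lambda>t. F (t - c)) has_real_derivative F' (t - c)) (at t)" for c
    using DERIV_shift[of F "F' (t - c)" t "- c"] assms by simp
  show ?thesis
    unfolding second_diff_def[abs_def]
    by (intro DERIV_diff DERIV_cmult shift)
qed

lemma isCont_second_diff:
  assumes "\<And>s. isCont F s"
  shows "isCont (second_diff F x y z) t"
  unfolding second_diff_def[abs_def]
  by (intro continuous_intros isCont_o2[OF _ assms])

lemma second_diff_eq_0:
  assumes "x \<le> y" "y \<le> z"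
    and "\<And>s. s \<le> - e \<Longrightarrow> F s = 0" "\<And>s. e \<le> s \<Longrightarrow> F s = \<alpha> * s + \<beta>"
    and "t \<le> x - e \<or> z + e \<le> t"
  shows "second_diff F x y z t = 0"
  using assms(5)
proof
  assume "t \<le> x - e"
  then show ?thesis
    using assms(1-3) by (simp add: second_diff_def)
next
  assume "z + e \<le> t"
  then show ?thesis
    using assms(1,2,4) by (simp add: second_diff_def algebra_simps)
qed

lemma second_diff_approx:
  assumes "x \<le> y" "y \<le> z" and "\<And>s. \<bar>F s - G s\<bar> \<le> \<delta>"
  shows "\<bar>second_diff F x y z t - second_diff G x y z t\<bar> \<le> 2 * (z - x) * \<delta>"
proof -
  define D where "D s = F s - G s" for s
  have "\<bar>D (t - u) - D (t - v)\<bar> \<le> 2 * \<delta>" for u v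
    using assms(3)[of "t - u"] assms(3)[of "t - v"] by (simp add: D_def)
  then have "\<bar>(z - y) * (D (t - x) - D (t - y))\<bar> \<le> (z - y) * (2 * \<delta>)"
      "\<bar>(y - x) * (D (t - y) - D (t - z))\<bar> \<le> (y - x) * (2 * \<delta>)"
    using assms(1,2) by (auto simp: abs_mult intro: mult_left_mono)
  moreover have "second_diff F x y z t - second_diff G x y z t
      = (z - y) * (D (t - x) - D (t - y)) - (y - x) * (D (t - y) - D (t - z))"
    by (simp add: second_diff_def D_def algebra_simps)
  ultimately show ?thesis
    by (simp add: algebra_simps)
qed

lemma tent_eq_0:
  "x \<le> y \<Longrightarrow> y \<le> z \<Longrightarrow> t \<notin> {x<..<z} \<Longrightarrow> second_diff (max 0) x y z t = 0"
  by (rule second_diff_eq_0[where e=0 and \<alpha>=1 and \<beta>=0]) auto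

lemma smooth_tent_eq_0:
  "0 < e \<Longrightarrow> x \<le> y \<Longrightarrow> y \<le> z \<Longrightarrow> t \<notin> {x - e<..<z + e} \<Longrightarrow> second_diff (smooth_ramp e) x y z t = 0"
  by (rule second_diff_eq_0[where e=e and \<alpha>=1 and \<beta>=0]) (auto simp: smooth_ramp_eq)

lemma smooth_tent_approx:
  assumes "0 < e" "x \<le> y" "y \<le> z"
  shows "\<bar>second_diff (smooth_ramp e) x y z t - second_diff (max 0) x y z t\<bar>
    \<le> 2 * (z - x) * e * indicator {x - e..z + e} t"
proof (cases "t \<in> {x - e..z + e}")
  case True
  then show ?thesis
    using second_diff_approx[OF assms(2,3) smooth_ramp_approx[OF assms(1)]] by simp
next
  case False
  then have "t \<notin> {x - e<..<z + e}" "t \<notin> {x<..<z}"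
    using assms by auto
  then show ?thesis
    using False smooth_tent_eq_0[OF assms] tent_eq_0[OF assms(2,3)] by simp
qed

lemma test_funI:
  assumes "\<And>t. (\<phi> has_real_derivative \<phi>' t) (at t)" "\<And>t. isCont \<phi>' t"
    and "\<And>t. R < \<bar>t\<bar> \<Longrightarrow> \<phi> t = 0"
  shows "test_fun \<phi>"
  using assms DERIV_imp_deriv[OF assms(1)]
  by (auto simp: test_fun_def real_differentiable_def intro!: continuous_at_imp_continuous_on)

lemma integrable_compact_support:
  fixes u :: "real \<Rightarrow> real"
  assumes "\<And>t. isCont u t" "\<And>t. R < \<bar>t\<bar> \<Longrightarrow> u t = 0"
  shows "integrable lborel u"
proof -
  have "integrable lborel (\<lambda>t. indicator {-R..R} t *\<^sub>R u t)"
    using assms(1) by (intro borel_integrable_compact continuous_at_imp_continuous_on) auto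
  moreover have "(\<lambda>t. indicator {-R..R} t *\<^sub>R u t) = u"
    using assms(2) by (force simp: indicator_def fun_eq_iff)
  ultimately show ?thesis
    by simp
qed

lemma integral_mult_tendsto_uniform:
  fixes w u0 :: "real \<Rightarrow> real" and u :: "nat \<Rightarrow> real \<Rightarrow> real"
  assumes w_cont: "\<And>t. isCont w t"
    and int_n: "\<And>n. integrable lborel (\<lambda>t. w t * u n t)" and int_0: "integrable lborel (\<lambda>t. w t * u0 t)"
    and close: "\<And>n t. \<bar>u n t - u0 t\<bar> \<le> \<delta> n * indicator {-R..R} t" and "\<delta> \<longlonglongrightarrow> 0"
  shows "(\<lambda>n. \<integral>t. w t * u n t \<partial>lborel) \<longlonglongrightarrow> (\<integral>t. w t * u0 t \<partial>lborel)"
proof -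
  define W where "W t = indicator {-R..R} t * \<bar>w t\<bar>" for t
  have W_int: "integrable lborel W"
    unfolding W_def using borel_integrable_compact[of "{-R..R}" "\<lambda>t. \<bar>w t\<bar>"] w_cont
    by (simp add: continuous_at_imp_continuous_on continuous_intros)
  have "\<forall>n. norm ((\<integral>t. w t * u n t \<partial>lborel) - (\<integral>t. w t * u0 t \<partial>lborel)) \<le> \<delta> n * (\<integral>t. W t \<partial>lborel)"
  proof
    fix n
    have "norm ((\<integral>t. w t * u n t \<partial>lborel) - (\<integral>t. w t * u0 t \<partial>lborel))
        = norm (\<integral>t. w t * u n t - w t * u0 t \<partial>lborel)"
      using int_n int_0 by simp
    also have "\<dots> \<le> (\<integral>t. \<delta> n * W t \<partial>lborel)"
    proof (rule Bochner_Integration.integral_norm_bound_integral)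
      show "integrable lborel (\<lambda>t. w t * u n t - w t * u0 t)" "integrable lborel (\<lambda>t. \<delta> n * W t)"
        using int_n int_0 W_int by auto
      show "norm (w t * u n t - w t * u0 t) \<le> \<delta> n * W t" for t
      proof -
        have "norm (w t * u n t - w t * u0 t) = \<bar>w t\<bar> * \<bar>u n t - u0 t\<bar>"
          by (simp add: abs_mult flip: right_diff_distrib)
        also have "\<dots> \<le> \<bar>w t\<bar> * (\<delta> n * indicator {-R..R} t)"
          by (intro mult_left_mono close) simp
        finally show ?thesis
          by (simp add: W_def mult_ac)
      qed
    qed
    finally show "norm ((\<integral>t. w t * u n t \<partial>lborel) - (\<integral>t. w t * u0 t \<partial>lborel))
        \<le> \<delta> n * (\<integral>t. W t \<partial>lborel)"
      by simp
  qed
  moreover have "(\<lambda>n. \<delta> n * (\<integral>t. W t \<partial>lborel)) \<longlonglongrightarrow> 0"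
    using tendsto_mult_left_zero[OF \<open>\<delta> \<longlonglongrightarrow> 0\<close>] by simp
  ultimately show ?thesis
    by (rule LIM_zero_cancel[OF Lim_null_comparison[OF always_eventually]])
qed

lemma integral_mult_second_diff:
  fixes w F :: "real \<Rightarrow> real"
  assumes "\<And>c. integrable lborel (\<lambda>t. w t * F (t - c))"
  shows "(\<integral>t. w t * second_diff F x y z t \<partial>lborel)
    = (z - y) * ((\<integral>t. w t * F (t - x) \<partial>lborel) - (\<integral>t. w t * F (t - y) \<partial>lborel))
      - (y - x) * ((\<integral>t. w t * F (t - y) \<partial>lborel) - (\<integral>t. w t * F (t - z) \<partial>lborel))"
proof -
  have "(\<lambda>t. w t * second_diff F x y z t) = (\<lambda>t. (z - y) * (w t * F (t - x) - w t * F (t - y))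
      - (y - x) * (w t * F (t - y) - w t * F (t - z)))"
    by (simp add: fun_eq_iff second_diff_def algebra_simps)
  then show ?thesis
    using assms by (simp add: Bochner_Integration.integral_diff)
qed

lemma integrable_mult_hat:
  fixes w :: "real \<Rightarrow> real"
  assumes "0 < e" "\<And>t. isCont w t"
  shows "integrable lborel (\<lambda>t. w t * hat e (t - c))"
  by (intro integrable_compact_support[where R="\<bar>c\<bar> + e"] continuous_intros
      isCont_o2[OF _ isCont_hat[OF \<open>0 < e\<close>]] assms(2))
    (auto simp: hat_eq_0[OF \<open>0 < e\<close>])

lemma abs_integral_mult_hat_diff_le:
  fixes w :: "real \<Rightarrow> real"
  assumes "0 < e" and w_cont: "\<And>t. isCont w t" and close: "\<And>t. \<bar>t - c\<bar> < e \<Longrightarrow> \<bar>w t - w c\<bar> \<le> \<eta>"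
  shows "\<bar>(\<integral>t. w t * hat e (t - c) \<partial>lborel) - w c\<bar> \<le> \<eta>"
proof -
  have int_hat: "integrable lborel (\<lambda>t. hat e (t - c))"
    using integrable_mult_hat[OF \<open>0 < e\<close>, of "\<lambda>_. 1"] by simp
  have int_w_hat: "integrable lborel (\<lambda>t. w t * hat e (t - c))"
    by (rule integrable_mult_hat[OF \<open>0 < e\<close> w_cont])
  have "(\<integral>t. w t * hat e (t - c) \<partial>lborel) - w c = (\<integral>t. (w t - w c) * hat e (t - c) \<partial>lborel)"
    using int_hat int_w_hat integral_hat[OF \<open>0 < e\<close>, of c]
    by (simp add: left_diff_distrib Bochner_Integration.integral_diff)
  also have "norm \<dots> \<le> (\<integral>t. \<eta> * hat e (t - c) \<partial>lborel)"
  proof (rule Bochner_Integration.integral_norm_bound_integral)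
    show "integrable lborel (\<lambda>t. (w t - w c) * hat e (t - c))"
      using int_hat int_w_hat by (simp add: left_diff_distrib)
    show "integrable lborel (\<lambda>t. \<eta> * hat e (t - c))"
      using int_hat by simp
    show "norm ((w t - w c) * hat e (t - c)) \<le> \<eta> * hat e (t - c)" for t
    proof (cases "\<bar>t - c\<bar> < e")
      case True
      then have "\<bar>w t - w c\<bar> * hat e (t - c) \<le> \<eta> * hat e (t - c)"
        using hat_nonneg[OF \<open>0 < e\<close>, of "t - c"] by (intro mult_right_mono close)
      then show ?thesis
        using hat_nonneg[OF \<open>0 < e\<close>, of "t - c"] by (simp add: abs_mult)
    qed (simp add: hat_eq_0[OF \<open>0 < e\<close>])
  qed
  also have "\<dots> = \<eta>"
    using integral_hat[OF \<open>0 < e\<close>] by simp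
  finally show ?thesis
    by simp
qed

lemma integral_mult_hat_tendsto:
  fixes w :: "real \<Rightarrow> real"
  assumes w_cont: "\<And>t. isCont w t"
  shows "(\<lambda>n. \<integral>t. w t * hat (inverse (real (Suc n))) (t - c) \<partial>lborel) \<longlonglongrightarrow> w c"
proof (rule LIMSEQ_I)
  fix r :: real
  assume "0 < r"
  then obtain d where "0 < d" and d: "\<And>t. dist t c < d \<Longrightarrow> dist (w t) (w c) < r / 2"
    using w_cont[of c] unfolding continuous_at_eps_delta by (metis half_gt_zero)
  obtain N where N: "inverse (real (Suc N)) < d"
    using reals_Archimedean[OF \<open>0 < d\<close>] by blast
  have "\<bar>(\<integral>t. w t * hat (inverse (real (Suc n))) (t - c) \<partial>lborel) - w c\<bar> \<le> r / 2" if "N \<le> n" for n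
  proof (rule abs_integral_mult_hat_diff_le[OF _ w_cont])
    have le: "inverse (real (Suc n)) \<le> inverse (real (Suc N))"
      using that by (intro le_imp_inverse_le) auto
    show "\<bar>w t - w c\<bar> \<le> r / 2" if t_close: "\<bar>t - c\<bar> < inverse (real (Suc n))" for t
    proof -
      have "\<bar>t - c\<bar> < d"
        using t_close le N by linarith
      then show ?thesis
        using d[of t] by (simp add: dist_real_def)
    qed
  qed simp
  with \<open>0 < r\<close> show "\<exists>N. \<forall>n\<ge>N. norm ((\<integral>t. w t * hat (inverse (real (Suc n))) (t - c) \<partial>lborel) - w c) < r"
    by force
qed

section \<open>Regularity of weak solutions\<close>

definition indef_integral :: "(real \<Rightarrow> real) \<Rightarrow> real \<Rightarrow> real \<Rightarrow> real" where
  "indef_integral f a t = integral {a..t} f"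

lemma continuous_on_indef_integral:
  "f integrable_on {a..b} \<Longrightarrow> continuous_on {a..b} (indef_integral f a)"
  unfolding indef_integral_def[abs_def] by (rule indefinite_integral_continuous_1)

lemma isCont_indef_integral:
  "(\<And>b. f integrable_on {a..b}) \<Longrightarrow> a < t \<Longrightarrow> isCont (indef_integral f a) t"
  by (rule continuous_on_interior[OF continuous_on_indef_integral[of f a "t + 1"]]) auto

lemma has_real_derivative_indef_integral:
  assumes "\<And>b. f integrable_on {a..b}" "a < t" "isCont f t"
  shows "(indef_integral f a has_real_derivative f t) (at t)"
proof -
  have "(indef_integral f a has_vector_derivative f t) (at t within {a..t + 1})"
    unfolding indef_integral_def[abs_def]
    using integral_has_vector_derivative_continuous_at[of f a "t + 1" t "{}"] assms
    by (simp add: continuous_at_imp_continuous_within)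
  then have "(indef_integral f a has_vector_derivative f t) (at t within {a<..<t + 1})"
    by (rule has_vector_derivative_within_subset) auto
  then show ?thesis
    using assms(2) at_within_open[of t "{a<..<t + 1}"]
    by (simp add: has_real_derivative_iff_has_vector_derivative)
qed

lemma has_integral_mult_affine:
  fixes f :: "real \<Rightarrow> real" and a u v \<alpha> \<beta> :: real
  defines "F \<equiv> indef_integral f a"
  defines "G \<equiv> \<lambda>t. F t * (\<alpha> * t + \<beta>) - \<alpha> * indef_integral F a t"
  assumes "finite S" and f_int: "\<And>b. f integrable_on {a..b}" and f_cont: "\<And>t. t \<notin> S \<Longrightarrow> isCont f t"
    and "a \<le> u" "u \<le> v"
  shows "((\<lambda>t. f t * (\<alpha> * t + \<beta>)) has_integral (G v - G u)) {u..v}"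
proof (rule fundamental_theorem_of_calculus_interior_strong[OF \<open>finite S\<close> \<open>u \<le> v\<close>])
  have F_int: "F integrable_on {a..b}" for b
    unfolding F_def using continuous_on_indef_integral[OF f_int] by (rule integrable_continuous_interval)
  show "continuous_on {u..v} G"
    unfolding G_def F_def using \<open>a \<le> u\<close>
    by (intro continuous_intros continuous_on_subset[OF continuous_on_indef_integral[OF f_int, of v]]
        continuous_on_subset[OF continuous_on_indef_integral[OF F_int[unfolded F_def], of v]]) auto
  fix t
  assume "t \<in> {u<..<v} - S"
  then have "a < t" "t \<notin> S"
    using \<open>a \<le> u\<close> by auto
  then have "(F has_real_derivative f t) (at t)" "(indef_integral F a has_real_derivative F t) (at t)"
    using f_int F_int unfolding F_def
    by (auto intro!: has_real_derivative_indef_integral f_cont isCont_indef_integral)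
  then show "(G has_vector_derivative f t * (\<alpha> * t + \<beta>)) (at t)"
    unfolding G_def has_real_derivative_iff_has_vector_derivative[symmetric]
    by (auto intro!: derivative_eq_intros simp: algebra_simps)
qed

lemma has_integral_mult_tent:
  fixes f :: "real \<Rightarrow> real" and a x y z :: real
  defines "H \<equiv> indef_integral (indef_integral f a) a"
  assumes "finite S" and f_int: "\<And>b. f integrable_on {a..b}" and f_cont: "\<And>t. t \<notin> S \<Longrightarrow> isCont f t"
    and "a \<le> x" "x < y" "y < z"
  shows "((\<lambda>t. f t * second_diff (max 0) x y z t) has_integral
    ((z - y) * H x - (z - x) * H y + (y - x) * H z)) UNIV"
proof -
  let ?F = "indef_integral f a"
  note affine = has_integral_mult_affine[OF \<open>finite S\<close> f_int f_cont]
  have "((\<lambda>t. f t * ((z - y) * t + - (z - y) * x)) has_integral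
      ?F y * (z - y) * (y - x) - (z - y) * (H y - H x)) {x..y}"
    using affine[where u=x and v=y and \<alpha>="z - y" and \<beta>="- (z - y) * x"] assms
    by (simp add: H_def algebra_simps)
  then have "((\<lambda>t. f t * second_diff (max 0) x y z t) has_integral
      ?F y * (z - y) * (y - x) - (z - y) * (H y - H x)) {x..y}"
    by (rule has_integral_eq[rotated]) (use assms in \<open>auto simp: second_diff_def max_def algebra_simps\<close>)
  moreover have "((\<lambda>t. f t * (- (y - x) * t + (y - x) * z)) has_integral
      - ?F y * (y - x) * (z - y) + (y - x) * (H z - H y)) {y..z}"
    using affine[where u=y and v=z and \<alpha>="- (y - x)" and \<beta>="(y - x) * z"] assms
    by (simp add: H_def algebra_simps)
  then have "((\<lambda>t. f t * second_diff (max 0) x y z t) has_integral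
      - ?F y * (y - x) * (z - y) + (y - x) * (H z - H y)) {y..z}"
    by (rule has_integral_eq[rotated]) (use assms in \<open>auto simp: second_diff_def max_def algebra_simps\<close>)
  ultimately have "((\<lambda>t. f t * second_diff (max 0) x y z t) has_integral
      ?F y * (z - y) * (y - x) - (z - y) * (H y - H x) + (- ?F y * (y - x) * (z - y) + (y - x) * (H z - H y)))
      {x..z}"
    by (rule has_integral_combine[where c=y, rotated 2]) (use assms in auto)
  also have "?F y * (z - y) * (y - x) - (z - y) * (H y - H x) + (- ?F y * (y - x) * (z - y) + (y - x) * (H z - H y))
      = (z - y) * H x - (z - x) * H y + (y - x) * H z"
    by (simp add: algebra_simps)
  finally show ?thesis
    by (rule has_integral_on_superset) (use tent_eq_0[of x y z] assms in auto)
qed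

lemma affine_if_second_diff_eq_0:
  fixes P :: "real \<Rightarrow> real"
  assumes "\<And>x y z. a \<le> x \<Longrightarrow> x < y \<Longrightarrow> y < z \<Longrightarrow> (z - y) * P x - (z - x) * P y + (y - x) * P z = 0"
  obtains c0 c1 where "\<And>t. a \<le> t \<Longrightarrow> P t = c0 + c1 * t"
proof
  define c1 where "c1 = P (a + 1) - P a"
  fix t
  assume "a \<le> t"
  then consider "t = a" | "a < t" "t < a + 1" | "t = a + 1" | "a + 1 < t"
    by linarith
  then show "P t = P a - a * c1 + c1 * t"
  proof cases
    case 2
    then show ?thesis
      using assms[of a t "a + 1"] by (simp add: c1_def algebra_simps)
  next
    case 4
    then show ?thesis
      using assms[of a "a + 1" t] by (simp add: c1_def algebra_simps)
  qed (simp_all add: c1_def algebra_simps)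
qed

lemma has_real_derivative_max_0_diff:
  fixes \<rho> s :: real
  assumes "s \<noteq> \<rho>"
  shows "((\<lambda>s. max 0 (\<rho> - s)) has_real_derivative (if s < \<rho> then - 1 else 0)) (at s)"
proof (cases "s < \<rho>")
  case True
  have "((\<lambda>s. \<rho> - s) has_real_derivative - 1) (at s)"
    by (auto intro!: derivative_eq_intros)
  then have "((\<lambda>s. max 0 (\<rho> - s)) has_real_derivative - 1) (at s)"
    by (rule has_field_derivative_transform_within_open[where S="{..<\<rho>}"]) (use True in auto)
  then show ?thesis
    using True by simp
next
  case False
  have "((\<lambda>s. max 0 (\<rho> - s)) has_real_derivative 0) (at s)"
    by (rule has_field_derivative_transform_within_open[OF DERIV_const, where S="{\<rho><..}"])
      (use assms False in auto)
  then show ?thesis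
    using False by simp
qed

locale weak_solution =
  fixes K V A A' \<rho> :: real and g h :: "real \<Rightarrow> real"
  assumes g_cont: "continuous_on UNIV g" and h_L2: "L2 h" and weak_deriv_g: "weak_deriv g h"
    and weak_eq: "\<And>\<phi>. test_fun \<phi> \<Longrightarrow> (\<integral>x. K\<^sup>2 * g x * \<phi> x + h x * deriv \<phi> x
      + V * indicator {A..A'} x * g x * \<phi> x \<partial>lborel) = \<phi> \<rho>"
begin

definition q :: "real \<Rightarrow> real" where
  "q t = K\<^sup>2 + V * indicator {A..A'} t"

lemma isCont_g: "isCont g t"
  using g_cont by (simp add: continuous_on_eq_continuous_at)

lemma isCont_q: "t \<noteq> A \<Longrightarrow> t \<noteq> A' \<Longrightarrow> isCont q t"
proof -
  assume "t \<noteq> A" "t \<noteq> A'"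
  then have "\<exists>U. open U \<and> t \<in> U \<and> (\<forall>s\<in>U. q s = q t)"
  proof (cases "t \<in> {A..A'}")
    case True
    with \<open>t \<noteq> A\<close> \<open>t \<noteq> A'\<close> show ?thesis
      by (intro exI[of _ "{A<..<A'}"]) (auto simp: q_def)
  next
    case False
    then show ?thesis
      by (intro exI[of _ "- {A..A'}"]) (auto simp: q_def)
  qed
  then have "eventually (\<lambda>s. q s = q t) (nhds t)"
    by (simp add: eventually_nhds)
  then show ?thesis
    using isCont_cong by force
qed

lemma abs_q_le: "\<bar>q t\<bar> \<le> K\<^sup>2 + \<bar>V\<bar>"
  using abs_triangle_ineq[of "K\<^sup>2" V] by (auto simp: q_def indicator_def)

lemma integrable_q_g_mult:
  assumes "\<And>t. isCont u t" "\<And>t. R < \<bar>t\<bar> \<Longrightarrow> u t = 0"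
  shows "integrable lborel (\<lambda>t. q t * g t * u t)"
proof -
  have gu: "integrable lborel (\<lambda>t. g t * u t)"
    using assms isCont_g by (intro integrable_compact_support[where R=R] continuous_intros) auto
  then have "integrable lborel (\<lambda>t. K\<^sup>2 * (g t * u t) + V * (indicator {A..A'} t *\<^sub>R (g t * u t)))"
    by (intro Bochner_Integration.integrable_add integrable_mult_right integrable_mult_indicator) auto
  then show ?thesis
    by (simp add: q_def algebra_simps)
qed

lemma integrable_h_mult:
  assumes "\<And>t. isCont u t" "\<And>t. R < \<bar>t\<bar> \<Longrightarrow> u t = 0"
  shows "integrable lborel (\<lambda>t. h t * u t)"
proof (rule Bochner_Integration.integrable_bound)
  have h: "h \<in> borel_measurable lborel" "integrable lborel (\<lambda>x. (h x)\<^sup>2)"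
    using h_L2 by (auto simp: L2_def)
  have "integrable lborel (\<lambda>t. (u t)\<^sup>2)"
    using assms by (intro integrable_compact_support[where R=R] continuous_intros) auto
  then show "integrable lborel (\<lambda>t. ((h t)\<^sup>2 + (u t)\<^sup>2) / 2)"
    using h(2) by (intro integrable_divide Bochner_Integration.integrable_add)
  have "u \<in> borel_measurable borel"
    using assms(1) by (intro borel_measurable_continuous_onI continuous_at_imp_continuous_on) auto
  then show "(\<lambda>t. h t * u t) \<in> borel_measurable lborel"
    using h(1) by measurable
  show "AE t in lborel. norm (h t * u t) \<le> norm (((h t)\<^sup>2 + (u t)\<^sup>2) / 2)"
  proof (intro AE_I2)
    fix t
    have "2 * (\<bar>h t\<bar> * \<bar>u t\<bar>) \<le> (h t)\<^sup>2 + (u t)\<^sup>2"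
      using sum_squares_bound[of "\<bar>h t\<bar>" "\<bar>u t\<bar>"] by simp
    then show "norm (h t * u t) \<le> norm (((h t)\<^sup>2 + (u t)\<^sup>2) / 2)"
      by (simp add: abs_mult)
  qed
qed

lemma weak_eq_smooth_tent:
  assumes "0 < e" "x < y" "y < z"
  shows "(\<integral>t. q t * g t * second_diff (smooth_ramp e) x y z t \<partial>lborel)
      - (\<integral>t. g t * second_diff (hat e) x y z t \<partial>lborel) = second_diff (smooth_ramp e) x y z \<rho>"
proof -
  let ?\<phi> = "second_diff (smooth_ramp e) x y z" and ?\<phi>' = "second_diff (smooth_step e) x y z"
    and ?\<phi>'' = "second_diff (hat e) x y z"
  define R where "R = \<bar>x\<bar> + \<bar>z\<bar> + e"
  have outside: "t \<le> x - e \<or> z + e \<le> t" if "R < \<bar>t\<bar>" for t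
    using that by (auto simp: R_def)
  have supp: "?\<phi> t = 0" "?\<phi>' t = 0" if "R < \<bar>t\<bar>" for t
  proof -
    show "?\<phi> t = 0"
      using assms outside[OF that] by (intro smooth_tent_eq_0) auto
    show "?\<phi>' t = 0"
      by (rule second_diff_eq_0[where e=e and \<alpha>=0 and \<beta>=1])
        (use assms outside[OF that] in \<open>auto simp: smooth_step_eq\<close>)
  qed
  have d\<phi>: "(?\<phi> has_real_derivative ?\<phi>' t) (at t)" for t
    by (intro has_real_derivative_second_diff has_real_derivative_smooth_ramp assms(1))
  have d\<phi>': "(?\<phi>' has_real_derivative ?\<phi>'' t) (at t)" for t
    by (intro has_real_derivative_second_diff has_real_derivative_smooth_step assms(1))
  have cont: "isCont ?\<phi>' t" "isCont ?\<phi>'' t" for t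
    by (intro DERIV_isCont[OF d\<phi>'] isCont_second_diff isCont_hat assms(1))+
  have test: "test_fun ?\<phi>" "test_fun ?\<phi>'"
    using test_funI[OF d\<phi> cont(1) supp(1)] test_funI[OF d\<phi>' cont(2) supp(2)] by blast+
  have deriv: "deriv ?\<phi> = ?\<phi>'" "deriv ?\<phi>' = ?\<phi>''"
    using DERIV_imp_deriv[OF d\<phi>] DERIV_imp_deriv[OF d\<phi>'] by auto
  have "(\<integral>t. q t * g t * ?\<phi> t + h t * ?\<phi>' t \<partial>lborel) = ?\<phi> \<rho>"
    using weak_eq[OF test(1)] by (simp add: deriv q_def algebra_simps)
  moreover have "integrable lborel (\<lambda>t. q t * g t * ?\<phi> t)" "integrable lborel (\<lambda>t. h t * ?\<phi>' t)"
    by (intro integrable_q_g_mult[where R=R] integrable_h_mult[where R=R] DERIV_isCont[OF d\<phi>] cont supp;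
        assumption)+
  moreover have "(\<integral>t. g t * deriv ?\<phi>' t \<partial>lborel) = - (\<integral>t. h t * ?\<phi>' t \<partial>lborel)"
    using weak_deriv_g test(2) unfolding weak_deriv_def by blast
  ultimately show ?thesis
    by (simp add: deriv)
qed

lemma tendsto_integral_q_g_smooth_tent:
  assumes "x < y" "y < z"
  shows "(\<lambda>n. \<integral>t. q t * g t * second_diff (smooth_ramp (inverse (real (Suc n)))) x y z t \<partial>lborel)
    \<longlonglongrightarrow> (\<integral>t. q t * g t * second_diff (max 0) x y z t \<partial>lborel)"
proof -
  define e where "e n = inverse (real (Suc n))" for n
  have e: "0 < e n" "e n \<le> 1" for n
    by (simp_all add: e_def field_simps)
  define R where "R = \<bar>x\<bar> + \<bar>z\<bar> + 1"
  let ?\<phi> = "\<lambda>n. second_diff (smooth_ramp (e n)) x y z" and ?\<tau> = "second_diff (max 0) x y z"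
  have inside: "{x - e n..z + e n} \<subseteq> {-R..R}" for n
    using e[of n] by (auto simp: R_def)
  have outside: "t \<notin> {x - e n<..<z + e n}" "t \<notin> {x<..<z}" if "R < \<bar>t\<bar>" for n t
    using that e[of n] by (auto simp: R_def)
  have supp: "?\<phi> n t = 0" "?\<tau> t = 0" if "R < \<bar>t\<bar>" for n t
  proof -
    show "?\<phi> n t = 0"
      by (rule smooth_tent_eq_0[OF e(1)]) (use assms outside(1)[OF that] in auto)
    show "?\<tau> t = 0"
      by (rule tent_eq_0) (use assms outside(2)[OF that] in auto)
  qed
  have isCont_\<phi>: "isCont (?\<phi> n) t" for n t
    using has_real_derivative_second_diff[OF has_real_derivative_smooth_ramp[OF e(1)]] by (rule DERIV_isCont)
  have isCont_\<tau>: "isCont ?\<tau> t" for t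
    by (intro isCont_second_diff continuous_intros)
  have "(\<lambda>n. \<integral>t. g t * (q t * ?\<phi> n t) \<partial>lborel) \<longlonglongrightarrow> (\<integral>t. g t * (q t * ?\<tau> t) \<partial>lborel)"
  proof (rule integral_mult_tendsto_uniform[where R=R and \<delta>="\<lambda>n. (K\<^sup>2 + \<bar>V\<bar>) * (2 * (z - x) * e n)"])
    show "integrable lborel (\<lambda>t. g t * (q t * ?\<phi> n t))" "integrable lborel (\<lambda>t. g t * (q t * ?\<tau> t))" for n
      using integrable_q_g_mult[OF isCont_\<phi> supp(1)] integrable_q_g_mult[OF isCont_\<tau> supp(2)]
      by (simp_all only: ac_simps)
    show "\<bar>q t * ?\<phi> n t - q t * ?\<tau> t\<bar> \<le> (K\<^sup>2 + \<bar>V\<bar>) * (2 * (z - x) * e n) * indicator {-R..R} t" for n t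
    proof -
      have "\<bar>q t * ?\<phi> n t - q t * ?\<tau> t\<bar> = \<bar>q t\<bar> * \<bar>?\<phi> n t - ?\<tau> t\<bar>"
        by (simp only: abs_mult flip: right_diff_distrib)
      also have "\<dots> \<le> (K\<^sup>2 + \<bar>V\<bar>) * (2 * (z - x) * e n * indicator {x - e n..z + e n} t)"
        using assms by (intro mult_mono abs_q_le smooth_tent_approx e) auto
      also have "\<dots> \<le> (K\<^sup>2 + \<bar>V\<bar>) * (2 * (z - x) * e n) * indicator {-R..R} t"
        using inside[of n] assms e[of n] by (auto simp: indicator_def)
      finally show ?thesis .
    qed
    show "(\<lambda>n. (K\<^sup>2 + \<bar>V\<bar>) * (2 * (z - x) * e n)) \<longlonglongrightarrow> 0"
      unfolding e_def by (intro tendsto_mult_right_zero LIMSEQ_inverse_real_of_nat)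
  qed (rule isCont_g)
  then show ?thesis
    by (simp only: ac_simps e_def)
qed

lemma second_diff_identity:
  assumes "x < y" "y < z"
  shows "(z - y) * g x - (z - x) * g y + (y - x) * g z
    = (\<integral>t. q t * g t * second_diff (max 0) x y z t \<partial>lborel) - second_diff (max 0) x y z \<rho>"
proof -
  define e where "e n = inverse (real (Suc n))" for n
  have e_pos: "0 < e n" for n
    by (simp add: e_def)
  let ?\<phi> = "\<lambda>n. second_diff (smooth_ramp (e n)) x y z" and ?\<tau> = "second_diff (max 0) x y z"
  let ?J = "\<lambda>u. \<integral>t. q t * g t * u t \<partial>lborel"
  let ?I = "\<lambda>c n. \<integral>t. g t * hat (e n) (t - c) \<partial>lborel"
  have "\<forall>n. norm (?\<phi> n \<rho> - ?\<tau> \<rho>) \<le> 2 * (z - x) * e n"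
  proof
    fix n
    have "norm (?\<phi> n \<rho> - ?\<tau> \<rho>) \<le> 2 * (z - x) * e n * indicator {x - e n..z + e n} \<rho>"
      using assms smooth_tent_approx[OF e_pos, of x y z n \<rho>] by simp
    also have "\<dots> \<le> 2 * (z - x) * e n"
      using assms e_pos[of n] by (simp add: indicator_def)
    finally show "norm (?\<phi> n \<rho> - ?\<tau> \<rho>) \<le> 2 * (z - x) * e n" .
  qed
  moreover have "(\<lambda>n. 2 * (z - x) * e n) \<longlonglongrightarrow> 0"
    unfolding e_def by (intro tendsto_mult_right_zero LIMSEQ_inverse_real_of_nat)
  ultimately have lim_\<phi>: "(\<lambda>n. ?\<phi> n \<rho>) \<longlonglongrightarrow> ?\<tau> \<rho>"
    by (rule LIM_zero_cancel[OF Lim_null_comparison[OF always_eventually]])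
  have eq_n: "?J (?\<phi> n) - ((z - y) * (?I x n - ?I y n) - (y - x) * (?I y n - ?I z n)) = ?\<phi> n \<rho>" for n
  proof -
    have "integrable lborel (\<lambda>t. g t * hat (e n) (t - c))" for c
      by (rule integrable_mult_hat[OF e_pos isCont_g])
    from integral_mult_second_diff[OF this, of x y z] show ?thesis
      using weak_eq_smooth_tent[OF e_pos[of n] assms] by linarith
  qed
  have lim_I: "?I c \<longlonglongrightarrow> g c" for c
    unfolding e_def by (rule integral_mult_hat_tendsto[OF isCont_g])
  have "(\<lambda>n. ?J (?\<phi> n)) \<longlonglongrightarrow> ?J ?\<tau>"
    unfolding e_def by (rule tendsto_integral_q_g_smooth_tent[OF assms])
  then have "(\<lambda>n. ?J (?\<phi> n) - ((z - y) * (?I x n - ?I y n) - (y - x) * (?I y n - ?I z n)))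
      \<longlonglongrightarrow> ?J ?\<tau> - ((z - y) * (g x - g y) - (y - x) * (g y - g z))"
    by (intro tendsto_diff tendsto_mult_left lim_I)
  with lim_\<phi> have "?J ?\<tau> - ((z - y) * (g x - g y) - (y - x) * (g y - g z)) = ?\<tau> \<rho>"
    unfolding eq_n by (rule LIMSEQ_unique[rotated])
  then show ?thesis
    by (simp add: algebra_simps)
qed
definition F :: "real \<Rightarrow> real \<Rightarrow> real" where
  "F a = indef_integral (\<lambda>t. q t * g t) a"

lemma integrable_on_q_g: "(\<lambda>t. q t * g t) integrable_on {a..b}"
proof -
  have g_int: "g integrable_on {u..v}" for u v
    by (intro integrable_continuous_interval continuous_on_subset[OF g_cont]) auto
  have "(\<lambda>t. if t \<in> {A..A'} then g t else 0) integrable_on {a..b}"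
    unfolding integrable_restrict_Int Int_atLeastAtMost by (rule g_int)
  then have "(\<lambda>t. indicator {A..A'} t * g t) integrable_on {a..b}"
    by (rule integrable_eq) (simp add: indicator_def)
  then have "(\<lambda>t. K\<^sup>2 * g t + V * (indicator {A..A'} t * g t)) integrable_on {a..b}"
    by (intro integrable_add integrable_on_mult_right g_int)
  then show ?thesis
    by (simp add: q_def algebra_simps)
qed

lemma isCont_q_g: "t \<noteq> A \<Longrightarrow> t \<noteq> A' \<Longrightarrow> isCont (\<lambda>t. q t * g t) t"
  by (intro continuous_intros isCont_q isCont_g)

lemma isCont_F: "a < t \<Longrightarrow> isCont (F a) t"
  unfolding F_def by (intro isCont_indef_integral integrable_on_q_g)

lemma has_real_derivative_F: "a < t \<Longrightarrow> t \<noteq> A \<Longrightarrow> t \<noteq> A' \<Longrightarrow> (F a has_real_derivative q t * g t) (at t)"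
  unfolding F_def by (intro has_real_derivative_indef_integral integrable_on_q_g isCont_q_g)

lemma g_representation:
  obtains c0 c1 where "\<And>t. a \<le> t \<Longrightarrow> g t = indef_integral (F a) a t - max 0 (\<rho> - t) + c0 + c1 * t"
proof -
  let ?H = "indef_integral (F a) a" and ?\<tau> = "second_diff (max 0)"
  have second_diff_P: "(z - y) * (g x - ?H x + max 0 (\<rho> - x)) - (z - x) * (g y - ?H y + max 0 (\<rho> - y))
      + (y - x) * (g z - ?H z + max 0 (\<rho> - z)) = 0" if "a \<le> x" "x < y" "y < z" for x y z
  proof -
    have int: "integrable lborel (\<lambda>t. q t * g t * ?\<tau> x y z t)"
      using that
      by (intro integrable_q_g_mult[where R="\<bar>x\<bar> + \<bar>z\<bar> + 1"] isCont_second_diff continuous_intros)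
        (auto intro!: tent_eq_0)
    have "((\<lambda>t. q t * g t * ?\<tau> x y z t) has_integral ((z - y) * ?H x - (z - x) * ?H y + (y - x) * ?H z)) UNIV"
      unfolding F_def using that
      by (intro has_integral_mult_tent[of "{A, A'}"] integrable_on_q_g isCont_q_g) auto
    then have "(\<integral>t. q t * g t * ?\<tau> x y z t \<partial>lborel) = (z - y) * ?H x - (z - x) * ?H y + (y - x) * ?H z"
      using has_integral_integral_lborel[OF int] has_integral_unique by blast
    then show ?thesis
      using second_diff_identity[OF that(2,3)] by (simp add: second_diff_def algebra_simps)
  qed
  obtain c0 c1 where "\<And>t. a \<le> t \<Longrightarrow> g t - ?H t + max 0 (\<rho> - t) = c0 + c1 * t"
    using affine_if_second_diff_eq_0[of a "\<lambda>t. g t - ?H t + max 0 (\<rho> - t)"] second_diff_P by blast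
  then show ?thesis
    by (intro that[of c0 c1]) (simp add: algebra_simps)
qed

lemma deriv_g_representation:
  obtains c where "\<And>s. a < s \<Longrightarrow> s \<noteq> \<rho> \<Longrightarrow> (g has_real_derivative deriv g s) (at s)"
    and "\<And>s. a < s \<Longrightarrow> s \<noteq> \<rho> \<Longrightarrow> deriv g s = F a s + c + (if s < \<rho> then 1 else 0)"
proof -
  obtain c0 c where rep: "\<And>t. a \<le> t \<Longrightarrow> g t = indef_integral (F a) a t - max 0 (\<rho> - t) + c0 + c * t"
    using g_representation[of a] by blast
  have g_deriv: "(g has_real_derivative F a s + c + (if s < \<rho> then 1 else 0)) (at s)"
    if "a < s" "s \<noteq> \<rho>" for s
  proof (rule has_field_derivative_transform_within_open[where S="{a<..}"])
    have "F a integrable_on {a..b}" for b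
      unfolding F_def by (intro integrable_continuous_interval continuous_on_indef_integral integrable_on_q_g)
    then have "(indef_integral (F a) a has_real_derivative F a s) (at s)"
      using that by (intro has_real_derivative_indef_integral isCont_F)
    then show "((\<lambda>t. indef_integral (F a) a t - max 0 (\<rho> - t) + c0 + c * t) has_real_derivative
        F a s + c + (if s < \<rho> then 1 else 0)) (at s)"
      using has_real_derivative_max_0_diff[OF that(2)]
      by (auto intro!: derivative_eq_intros)
  qed (use that rep in auto)
  then have "deriv g s = F a s + c + (if s < \<rho> then 1 else 0)" if "a < s" "s \<noteq> \<rho>" for s
    using that by (intro DERIV_imp_deriv)
  with g_deriv show ?thesis
    by (intro that[of c]) simp_all
qed

lemma has_real_derivative_g: "t \<noteq> \<rho> \<Longrightarrow> (g has_real_derivative deriv g t) (at t)"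
proof -
  assume "t \<noteq> \<rho>"
  obtain c where "\<And>s. t - 1 < s \<Longrightarrow> s \<noteq> \<rho> \<Longrightarrow> (g has_real_derivative deriv g s) (at s)"
    using deriv_g_representation[of "t - 1"] by blast
  with \<open>t \<noteq> \<rho>\<close> show ?thesis
    by simp
qed

lemma deriv_g_locally:
  assumes "t \<noteq> \<rho>"
  obtains S a c where "open S" "t \<in> S" "a < t" "\<And>s. s \<in> S \<Longrightarrow> deriv g s = F a s + c"
proof -
  define a where "a = min t \<rho> - 1"
  obtain c where "\<And>s. a < s \<Longrightarrow> s \<noteq> \<rho> \<Longrightarrow> (g has_real_derivative deriv g s) (at s)"
    and c: "\<And>s. a < s \<Longrightarrow> s \<noteq> \<rho> \<Longrightarrow> deriv g s = F a s + c + (if s < \<rho> then 1 else 0)"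
    by (rule deriv_g_representation[of a]) blast
  show ?thesis
  proof (cases "t < \<rho>")
    case True
    have "deriv g s = F a s + (c + 1)" if "s \<in> {a<..<\<rho>}" for s
      using c[of s] that by simp
    then show ?thesis
      using True by (intro that[of "{a<..<\<rho>}" a "c + 1"]) (simp_all add: a_def)
  next
    case False
    have "deriv g s = F a s + c" if "s \<in> {\<rho><..}" for s
      using c[of s] that by (simp add: a_def)
    then show ?thesis
      using False assms by (intro that[of "{\<rho><..}" a c]) (simp_all add: a_def)
  qed
qed

lemma isCont_deriv_g: "t \<noteq> \<rho> \<Longrightarrow> isCont (deriv g) t"
proof -
  assume "t \<noteq> \<rho>"
  then obtain S a c where S: "open S" "t \<in> S" "a < t" "\<And>s. s \<in> S \<Longrightarrow> deriv g s = F a s + c"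
    by (rule deriv_g_locally) blast
  have "isCont (\<lambda>s. F a s + c) t"
    using isCont_F[OF S(3)] by (intro continuous_intros)
  then show ?thesis
    by (rule isCont_transform_within_open[OF _ S(1,2)]) (simp add: S(4))
qed

lemma deriv_g_has_real_derivative:
  "t \<noteq> \<rho> \<Longrightarrow> t \<noteq> A \<Longrightarrow> t \<noteq> A' \<Longrightarrow> (deriv g has_real_derivative q t * g t) (at t)"
proof -
  assume "t \<noteq> \<rho>" "t \<noteq> A" "t \<noteq> A'"
  moreover obtain S a c where S: "open S" "t \<in> S" "a < t" "\<And>s. s \<in> S \<Longrightarrow> deriv g s = F a s + c"
    by (rule deriv_g_locally[OF \<open>t \<noteq> \<rho>\<close>]) blast
  ultimately have "((\<lambda>s. F a s + c) has_real_derivative q t * g t) (at t)"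
    by (auto intro!: derivative_eq_intros has_real_derivative_F)
  then show ?thesis
    by (rule has_field_derivative_transform_within_open[OF _ S(1,2)]) (simp add: S(4))
qed

lemma deriv_g_jump: "\<exists>l. (deriv g \<longlongrightarrow> l) (at_right \<rho>) \<and> (deriv g \<longlongrightarrow> l + 1) (at_left \<rho>)"
proof -
  define a where "a = \<rho> - 1"
  obtain c where "\<And>s. a < s \<Longrightarrow> s \<noteq> \<rho> \<Longrightarrow> (g has_real_derivative deriv g s) (at s)"
    and c: "\<And>s. a < s \<Longrightarrow> s \<noteq> \<rho> \<Longrightarrow> deriv g s = F a s + c + (if s < \<rho> then 1 else 0)"
    by (rule deriv_g_representation[of a]) blast
  have F_lim: "(F a \<longlongrightarrow> F a \<rho>) (at \<rho>)"
    using isCont_F[of a \<rho>] by (simp add: a_def isCont_def)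
  have "(deriv g \<longlongrightarrow> F a \<rho> + c) (at_right \<rho>)"
  proof (rule Lim_transform_eventually)
    show "((\<lambda>s. F a s + c) \<longlongrightarrow> F a \<rho> + c) (at_right \<rho>)"
      using F_lim by (intro tendsto_intros) (simp add: filterlim_at_split)
    show "eventually (\<lambda>s. F a s + c = deriv g s) (at_right \<rho>)"
      unfolding eventually_at_right_field
      by (intro exI[of _ "\<rho> + 1"]) (use c in \<open>simp add: a_def\<close>)
  qed
  moreover have "(deriv g \<longlongrightarrow> F a \<rho> + c + 1) (at_left \<rho>)"
  proof (rule Lim_transform_eventually)
    show "((\<lambda>s. F a s + c + 1) \<longlongrightarrow> F a \<rho> + c + 1) (at_left \<rho>)"
      using F_lim by (intro tendsto_intros) (simp add: filterlim_at_split)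
    show "eventually (\<lambda>s. F a s + c + 1 = deriv g s) (at_left \<rho>)"
      unfolding eventually_at_left_field
      by (intro exI[of _ a]) (use c in \<open>simp add: a_def\<close>)
  qed
  ultimately show ?thesis
    by blast
qed
end

section \<open>The pointwise bound\<close>

locale green_problem = weak_solution +
  assumes K_pos: "0 < K" and V_pos: "0 < V" and A_less: "A < A'"
    and g_L2: "integrable lborel (\<lambda>x. (g x)\<^sup>2)"
begin

definition \<mu> :: real where
  "\<mu> = sqrt (K\<^sup>2 + V)"

lemma mu_sq: "\<mu>\<^sup>2 - K\<^sup>2 = V"
  using V_pos by (simp add: \<mu>_def add_pos_nonneg)

lemma K_less_mu: "K < \<mu>"
  using K_pos V_pos real_less_rsqrt[of K "K\<^sup>2 + V"] by (simp add: \<mu>_def)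

sublocale R: decaying_solution K \<mu> A A'
  using K_pos K_less_mu A_less by unfold_locales

sublocale L: decaying_solution K \<mu> "- A'" "- A"
  using K_pos K_less_mu A_less by unfold_locales auto

lemma right_profile:
  assumes "(deriv g \<longlongrightarrow> l) (at_right \<rho>)"
  shows "\<forall>y\<ge>\<rho>. g y = g \<rho> / R.E \<rho> * R.E y" and "l = g \<rho> / R.E \<rho> * R.E' \<rho>"
proof -
  have "continuous_on {\<rho>..} g"
    using g_cont by (rule continuous_on_subset) simp
  moreover have "(g has_real_derivative deriv g y) (at y)" if "\<rho> < y" for y
    using that by (intro has_real_derivative_g) simp
  moreover have "continuous_on {\<rho><..} (deriv g)"
    by (intro continuous_at_imp_continuous_on ballI isCont_deriv_g) auto
  moreover have "(deriv g has_real_derivative (K\<^sup>2 + (\<mu>\<^sup>2 - K\<^sup>2) * indicator {A..A'} y) * g y) (at y)"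
    if "\<rho> < y" "y \<noteq> A" "y \<noteq> A'" for y
    using deriv_g_has_real_derivative[of y] that by (simp add: mu_sq q_def)
  ultimately show "\<forall>y\<ge>\<rho>. g y = g \<rho> / R.E \<rho> * R.E y" and "l = g \<rho> / R.E \<rho> * R.E' \<rho>"
    using R.eq_multiple_E[OF _ _ _ _ assms g_L2] by blast+
qed

lemma left_profile:
  assumes "(deriv g \<longlongrightarrow> l) (at_left \<rho>)"
  shows "\<forall>y\<ge>- \<rho>. g (- y) = g \<rho> / L.E (- \<rho>) * L.E y" and "- l = g \<rho> / L.E (- \<rho>) * L.E' (- \<rho>)"
proof -
  define g' where "g' t = - deriv g (- t)" for t
  have "continuous_on {- \<rho>..} (\<lambda>t. g (- t))"
    by (intro continuous_on_compose2[OF g_cont] continuous_intros) auto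
  moreover have "((\<lambda>t. g (- t)) has_real_derivative g' y) (at y)" if "- \<rho> < y" for y
    using has_real_derivative_g[of "- y"] that DERIV_mirror by (force simp: g'_def)
  moreover have "continuous_on {- \<rho><..} g'"
    unfolding g'_def
    by (intro continuous_at_imp_continuous_on ballI continuous_intros isCont_o2[OF _ isCont_deriv_g]) auto
  moreover have "(g' has_real_derivative (K\<^sup>2 + (\<mu>\<^sup>2 - K\<^sup>2) * indicator {- A'..- A} y) * g (- y)) (at y)"
    if "- \<rho> < y" "y \<noteq> - A'" "y \<noteq> - A" for y
  proof -
    have "(deriv g has_real_derivative q (- y) * g (- y)) (at (- y))"
      using that by (intro deriv_g_has_real_derivative) auto
    then have "(g' has_real_derivative q (- y) * g (- y)) (at y)"
      unfolding g'_def using DERIV_mirror DERIV_minus by fastforce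
    moreover have "indicator {- A'..- A} y = (indicator {A..A'} (- y) :: real)"
      by (auto simp: indicator_def)
    ultimately show ?thesis
      by (simp add: q_def mu_sq)
  qed
  moreover have "(g' \<longlongrightarrow> - l) (at_right (- \<rho>))"
    using assms unfolding g'_def filterlim_at_left_to_right by (intro tendsto_minus) simp
  moreover have "integrable lborel (\<lambda>t. (g (- t))\<^sup>2)"
    using lborel_integrable_real_affine_iff[of "- 1" "\<lambda>t. (g t)\<^sup>2" 0] g_L2 by simp
  ultimately have "\<forall>y\<ge>- \<rho>. g (- y) = g (- (- \<rho>)) / L.E (- \<rho>) * L.E y"
    and "- l = g (- (- \<rho>)) / L.E (- \<rho>) * L.E' (- \<rho>)"
    using L.eq_multiple_E[of "- \<rho>" "\<lambda>t. g (- t)" g' "- l"] by blast+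
  then show "\<forall>y\<ge>- \<rho>. g (- y) = g \<rho> / L.E (- \<rho>) * L.E y"
    and "- l = g \<rho> / L.E (- \<rho>) * L.E' (- \<rho>)"
    by (simp_all only: minus_minus)
qed

lemma abs_g_pole_le: "2 * \<bar>g \<rho>\<bar> \<le> 1 / K"
proof -
  obtain l where right: "(deriv g \<longlongrightarrow> l) (at_right \<rho>)" and left: "(deriv g \<longlongrightarrow> l + 1) (at_left \<rho>)"
    using deriv_g_jump by blast
  define r1 r2 where "r1 = R.E' \<rho> / R.E \<rho>" and "r2 = L.E' (- \<rho>) / L.E (- \<rho>)"
  have "r1 \<le> - K" "r2 \<le> - K"
    using R.E'_le[of \<rho>] R.E_pos[of \<rho>] L.E'_le[of "- \<rho>"] L.E_pos[of "- \<rho>"]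
    by (simp_all add: r1_def r2_def field_simps)
  then have "2 * K \<le> \<bar>r1 + r2\<bar>"
    by linarith
  moreover have "g \<rho> * (r1 + r2) = - 1"
    using right_profile(2)[OF right] left_profile(2)[OF left] by (simp add: r1_def r2_def algebra_simps)
  then have "\<bar>g \<rho>\<bar> * \<bar>r1 + r2\<bar> = 1"
    by (metis abs_minus_cancel abs_mult abs_one)
  ultimately have "\<bar>g \<rho>\<bar> * (2 * K) \<le> 1"
    by (metis abs_ge_zero mult_left_mono)
  then show ?thesis
    using K_pos by (simp add: field_simps)
qed

lemma abs_g_le:
  "\<bar>g v\<bar> \<le> 1 / K * exp (- K * \<bar>v - \<rho>\<bar>)
     * exp (- (\<mu> - K) * max 0 (min (max v \<rho>) A' - max (min v \<rho>) A))"
proof -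
  obtain l where right: "(deriv g \<longlongrightarrow> l) (at_right \<rho>)" and left: "(deriv g \<longlongrightarrow> l + 1) (at_left \<rho>)"
    using deriv_g_jump by blast
  show ?thesis
  proof (cases "\<rho> \<le> v")
    case True
    have "g v = g \<rho> / R.E \<rho> * R.E v"
      using right_profile(1)[OF right] True by blast
    then show ?thesis
      using R.abs_scaled_E_le[OF True abs_g_pole_le] True by simp
  next
    case False
    then have "- \<rho> \<le> - v"
      by simp
    then have "g (- (- v)) = g \<rho> / L.E (- \<rho>) * L.E (- v)"
      using left_profile(1)[OF left] by blast
    moreover have "min (- v) (- A) - max (- \<rho>) (- A') = min \<rho> A' - max v A"
      by (simp add: min_def max_def)
    ultimately show ?thesis
      using L.abs_scaled_E_le[OF \<open>- \<rho> \<le> - v\<close> abs_g_pole_le] False by simp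
  qed
qed
end

lemma measure_Icc_Int_Icc:
  fixes a b c d :: real
  shows "measure lborel ({a..b} \<inter> {c..d}) = max 0 (min b d - max a c)"
proof (cases "max a c \<le> min b d")
  case True
  then show ?thesis
    by (simp add: Int_atLeastAtMost)
next
  case False
  then have "{a..b} \<inter> {c..d} = {}"
    by auto
  moreover have "max 0 (min b d - max a c) = 0"
    using False by linarith
  ultimately show ?thesis
    by simp
qed

theorem mainTheorem2:
  shows "\<exists>C::real. \<forall>(k::int) (A::real) (A'::real) (\<rho>::real) (g::real \<Rightarrow> real).
    k \<noteq> 0 \<longrightarrow> A < A' \<longrightarrow> green_sol k A A' \<rho> g \<longrightarrow> continuous_on UNIV g \<longrightarrow>
    (\<forall>v::real. \<bar>g v\<bar> \<le> C / \<bar>real_of_int k\<bar> * exp (- \<bar>real_of_int k\<bar> * \<bar>v - \<rho>\<bar>)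
        * exp (- (sqrt ((real_of_int k)^2 + 8) - \<bar>real_of_int k\<bar>)
               * measure lborel ({min v \<rho>..max v \<rho>} \<inter> {A..A'})))"
proof (intro exI[of _ 1] allI impI)
  fix k :: int and A A' \<rho> v :: real and g :: "real \<Rightarrow> real"
  assume "k \<noteq> 0" "A < A'" "green_sol k A A' \<rho> g" "continuous_on UNIV g"
  then obtain h where "L2 g" "L2 h" "weak_deriv g h"
    and "\<And>\<phi>. test_fun \<phi> \<Longrightarrow> (\<integral>x. (real_of_int k)\<^sup>2 * g x * \<phi> x + h x * deriv \<phi> x
      + 8 * indicator {A..A'} x * g x * \<phi> x \<partial>lborel) = \<phi> \<rho>"
    unfolding green_sol_def H1_def by blast
  with \<open>k \<noteq> 0\<close> \<open>A < A'\<close> \<open>continuous_on UNIV g\<close>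
  interpret green_problem "\<bar>real_of_int k\<bar>" 8 A A' \<rho> g h
    by unfold_locales (auto simp: L2_def)
  show "\<bar>g v\<bar> \<le> 1 / \<bar>real_of_int k\<bar> * exp (- \<bar>real_of_int k\<bar> * \<bar>v - \<rho>\<bar>)
      * exp (- (sqrt ((real_of_int k)\<^sup>2 + 8) - \<bar>real_of_int k\<bar>)
        * measure lborel ({min v \<rho>..max v \<rho>} \<inter> {A..A'}))"
    using abs_g_le[of v] unfolding measure_Icc_Int_Icc \<mu>_def power2_abs .
qed

end
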